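(* Let $\mathcal{C}$ be a 3XOR instance on variable set $\mathcal{X}$ and suppose every SOS refutation of $\mathcal{C}$ requires degree exceeding $r$ (i.e. a degree-$r$ pseudo-expectation operator for $\mathcal{C}$ exists). Then every SOS refutation of the statement "$G_{\mathcal{C}}$ and $G_{\mathcal{C}^0}$ are isomorphic" requires degree exceeding $r/3$.
   Context: A 3XOR instance $\mathcal{C}$ over $\mathcal{X}$ consists of equations $x_{j_1}+x_{j_2}+x_{j_3}=b$ over $\mathbb{Z}_2$ on three distinct variables; $\mathcal{C}^0$ replaces every right-hand side by $0$. Graph $G_{\mathcal{C}}$: for each variable $x$, two variable vertices $x\mapsto 0,x\mapsto 1$ joined by an edge; for each equation $C$ on $x_1,x_2,x_3$, four constraint vertices $\alpha_C$, one per satisfying assignment $\alpha=(x_1\mapsto a_1,x_2\mapsto a_2,x_3\mapsto a_3)$ of $C$, forming a clique, each adjacent to the variable vertices $x_i\mapsto a_i$; variable vertices are shared across constraints, constraint vertices are not. SOS for 3XOR: a degree-$r$ pseudo-expectation for $\mathcal{C}$ is a linear functional $\tilde{E}$ on real polynomials of degree at most $r$ in indeterminates $A[x\mapsto a]$ ($x\in\mathcal{X},a\in\mathbb{Z}_2$) with $\tilde{E}[1]=1$ and, for all polynomials $q$ with the product of degree at most $r$: $\tilde{E}[(A[x\mapsto a]^2-A[x\mapsto a])q]=0$; $\tilde{E}[(A[x\mapsto 0]+A[x\mapsto 1]-1)q]=0$; for each $C\in\mathcal{C}$ on $x_1,x_2,x_3$, $\tilde{E}[(\sum_{\alpha\text{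 satisfying }C}A[x_1\mapsto\alpha(x_1)]A[x_2\mapsto\alpha(x_2)]A[x_3\mapsto\alpha(x_3)]-1)q]=0$; and $\tilde{E}[p^2]\ge0$ for all $p$ of degree at most $r/2$. A degree-$r$ SOS refutation exists iff no such operator exists. SOS for isomorphism of $G,H$ ($|V(G)|=|V(H)|$, $|E(G)|=|E(H)|$): a degree-$r$ pseudo-expectation is a linear functional $\tilde{E}$ on polynomials of degree at most $r$ in indeterminates $\Pi[u\mapsto v]$ ($u\in V(G)$, $v\in V(H)$) with $\tilde{E}[1]=1$ and, for all polynomials with products of degree at most $r$: $\tilde{E}[(\Pi[u\mapsto v]^2-\Pi[u\mapsto v])q]=0$; $\tilde{E}[(\sum_{v}\Pi[u\mapsto v]-1)q]=0$ for each $u$ and $\tilde{E}[(\sum_u\Pi[u\mapsto v]-1)q]=0$ for each $v$; $\tilde{E}[(\sum_{\{u,u'\}\in E(G)}\sum_{v,v':\{v,v'\}\in E(H)}\Pi[u\mapsto v]\Pi[u'\mapsto v']-|E(G)|)p^2]\ge0$; $\tilde{E}[p^2]\ge 0$ for $\deg p\le r/2$. A degree-$r$ SOS refutation of isomorphism exists iff no such operator exists. *)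

theory Defs
  imports Complex_Main "HOL-Library.Multiset"
begin

type_synonym 'v rpoly = "'v multiset \<Rightarrow> real"

definition poly_over :: "'v set \<Rightarrow> 'v rpoly \<Rightarrow> bool" where
  "poly_over S p \<longleftrightarrow> finite {m. p m \<noteq> 0} \<and> (\<forall>m. p m \<noteq> 0 \<longrightarrow> set_mset m \<subseteq> S)"

definition deg_le :: "'v rpoly \<Rightarrow> nat \<Rightarrow> bool" where
  "deg_le p d \<longleftrightarrow> (\<forall>m. p m \<noteq> 0 \<longrightarrow> size m \<le> d)"

definition pconst :: "real \<Rightarrow> 'v rpoly" where
  "pconst c = (\<lambda>m. if m = {#} then c else 0)"

definition pvar :: "'v \<Rightarrow> 'v rpoly" where
  "pvar v = (\<lambda>m. if m = {#v#} then 1 else 0)"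

definition padd :: "'v rpoly \<Rightarrow> 'v rpoly \<Rightarrow> 'v rpoly" where
  "padd p q = (\<lambda>m. p m + q m)"

definition psub :: "'v rpoly \<Rightarrow> 'v rpoly \<Rightarrow> 'v rpoly" where
  "psub p q = (\<lambda>m. p m - q m)"

definition psmult :: "real \<Rightarrow> 'v rpoly \<Rightarrow> 'v rpoly" where
  "psmult c p = (\<lambda>m. c * p m)"

definition psum :: "'i set \<Rightarrow> ('i \<Rightarrow> 'v rpoly) \<Rightarrow> 'v rpoly" where
  "psum I f = (\<lambda>m. \<Sum>i\<in>I. f i m)"

definition pmul :: "'v rpoly \<Rightarrow> 'v rpoly \<Rightarrow> 'v rpoly" where
  "pmul p q = (\<lambda>m. \<Sum>a\<in>{a. a \<subseteq># m}. p a * q (m - a))"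

text \<open>A linear functional on polynomials is determined by its values L on monomials.\<close>

definition pE :: "('v multiset \<Rightarrow> real) \<Rightarrow> 'v rpoly \<Rightarrow> real" where
  "pE L p = (\<Sum>m\<in>{m. p m \<noteq> 0}. p m * L m)"

definition annihilates :: "('v multiset \<Rightarrow> real) \<Rightarrow> 'v set \<Rightarrow> nat \<Rightarrow> 'v rpoly \<Rightarrow> bool" where
  "annihilates L S r g \<longleftrightarrow>
     (\<forall>q. poly_over S q \<longrightarrow> deg_le (pmul g q) r \<longrightarrow> pE L (pmul g q) = 0)"

definition psd_op :: "('v multiset \<Rightarrow> real) \<Rightarrow> 'v set \<Rightarrow> nat \<Rightarrow> bool" where
  "psd_op L S r \<longleftrightarrow> (\<forall>p. poly_over S p \<longrightarrow> deg_le p (r div 2) \<longrightarrow> pE L (pmul p p) \<ge> 0)"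

text \<open>An equation x1 + x2 + x3 = b over Z_2 is a tuple (x1,x2,x3,b); Z_2 is bool
  (False = 0, True = 1); an instance is a list of equations.\<close>

type_synonym 'x xor_eq = "'x \<times> 'x \<times> 'x \<times> bool"

fun sat3 :: "'x xor_eq \<Rightarrow> bool \<times> bool \<times> bool \<Rightarrow> bool" where
  "sat3 (x1, x2, x3, b) (a1, a2, a3) \<longleftrightarrow> ((a1 \<noteq> a2) \<noteq> a3) = b"

fun eq_ok :: "'x set \<Rightarrow> 'x xor_eq \<Rightarrow> bool" where
  "eq_ok X (x1, x2, x3, b) \<longleftrightarrow> x1 \<in> X \<and> x2 \<in> X \<and> x3 \<in> X \<and> x1 \<noteq> x2 \<and> x1 \<noteq> x3 \<and> x2 \<noteq> x3"

definition xor3_instance :: "'x set \<Rightarrow> 'x xor_eq list \<Rightarrow> bool" where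
  "xor3_instance X cs \<longleftrightarrow> finite X \<and> (\<forall>e\<in>set cs. eq_ok X e)"

text \<open>C^0: all right-hand sides replaced by 0.\<close>
definition homog :: "'x xor_eq list \<Rightarrow> 'x xor_eq list" where
  "homog cs = map (\<lambda>(x1, x2, x3, b). (x1, x2, x3, False)) cs"

fun eq_poly :: "'x xor_eq \<Rightarrow> ('x \<times> bool) rpoly" where
  "eq_poly (x1, x2, x3, b) =
     psub (psum {\<alpha>. sat3 (x1, x2, x3, b) \<alpha>}
             (\<lambda>(a1, a2, a3). pmul (pvar (x1, a1)) (pmul (pvar (x2, a2)) (pvar (x3, a3)))))
          (pconst 1)"

text \<open>Degree-r pseudo-expectation for a 3XOR instance; indeterminate A[x->a] is (x,a).\<close>
definition xor_pseudo_exp ::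
  "'x set \<Rightarrow> 'x xor_eq list \<Rightarrow> nat \<Rightarrow> (('x \<times> bool) multiset \<Rightarrow> real) \<Rightarrow> bool" where
  "xor_pseudo_exp X cs r L \<longleftrightarrow>
     (let S = X \<times> (UNIV :: bool set) in
       L {#} = 1 \<and>
       (\<forall>x\<in>X. \<forall>a. annihilates L S r
           (psub (pmul (pvar (x, a)) (pvar (x, a))) (pvar (x, a)))) \<and>
       (\<forall>x\<in>X. annihilates L S r
           (psub (padd (pvar (x, False)) (pvar (x, True))) (pconst 1))) \<and>
       (\<forall>e\<in>set cs. annihilates L S r (eq_poly e)) \<and>
       psd_op L S r)"

datatype 'x gvert = VarV 'x bool | ConV nat "bool \<times> bool \<times> bool"

fun ev1 :: "'x xor_eq \<Rightarrow> 'x" where "ev1 (x1, x2, x3, b) = x1"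
fun ev2 :: "'x xor_eq \<Rightarrow> 'x" where "ev2 (x1, x2, x3, b) = x2"
fun ev3 :: "'x xor_eq \<Rightarrow> 'x" where "ev3 (x1, x2, x3, b) = x3"

text \<open>Constraint vertices are tagged by the position i of the equation in the list.\<close>
definition gc_verts :: "'x set \<Rightarrow> 'x xor_eq list \<Rightarrow> 'x gvert set" where
  "gc_verts X cs =
     {VarV x a | x a. x \<in> X} \<union>
     {ConV i \<alpha> | i \<alpha>. i < length cs \<and> sat3 (cs ! i) \<alpha>}"

definition gc_edges :: "'x set \<Rightarrow> 'x xor_eq list \<Rightarrow> 'x gvert set set" where
  "gc_edges X cs =
     {{VarV x False, VarV x True} | x. x \<in> X} \<union>
     {{ConV i \<alpha>, ConV i \<beta>} | i \<alpha> \<beta>.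
        i < length cs \<and> sat3 (cs ! i) \<alpha> \<and> sat3 (cs ! i) \<beta> \<and> \<alpha> \<noteq> \<beta>} \<union>
     {{ConV i (a1, a2, a3), VarV y c} | i a1 a2 a3 y c.
        i < length cs \<and> sat3 (cs ! i) (a1, a2, a3) \<and>
        ((y, c) = (ev1 (cs ! i), a1) \<or> (y, c) = (ev2 (cs ! i), a2) \<or> (y, c) = (ev3 (cs ! i), a3))}"

text \<open>Indeterminate Pi[u->v] is the pair (u,v).  The edge polynomial sums over unordered edges {u,u'} of G (with one
orientation) and ordered pairs (v,v') with {v,v'} an edge of H; summing over both
orientations of the G-edge and halving yields literally the same polynomial.\<close>

definition edge_poly :: "'v set set \<Rightarrow> 'w set set \<Rightarrow> ('v \<times> 'w) rpoly" where
  "edge_poly EG EH =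
     psmult (1/2)
       (psum {(u, u'). {u, u'} \<in> EG}
          (\<lambda>(u, u'). psum {(v, v'). {v, v'} \<in> EH}
             (\<lambda>(v, v'). pmul (pvar (u, v)) (pvar (u', v')))))"

definition iso_pseudo_exp ::
  "'v set \<Rightarrow> 'v set set \<Rightarrow> 'w set \<Rightarrow> 'w set set \<Rightarrow> nat \<Rightarrow> (('v \<times> 'w) multiset \<Rightarrow> real) \<Rightarrow> bool" where
  "iso_pseudo_exp VG EG VH EH r L \<longleftrightarrow>
     (let S = VG \<times> VH in
       L {#} = 1 \<and>
       (\<forall>u\<in>VG. \<forall>v\<in>VH. annihilates L S r
           (psub (pmul (pvar (u, v)) (pvar (u, v))) (pvar (u, v)))) \<and>
       (\<forall>u\<in>VG. annihilates L S r (psub (psum VH (\<lambda>v. pvar (u, v))) (pconst 1))) \<and>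
       (\<forall>v\<in>VH. annihilates L S r (psub (psum VG (\<lambda>u. pvar (u, v))) (pconst 1))) \<and>
       (\<forall>p. poly_over S p \<longrightarrow>
           deg_le (pmul (psub (edge_poly EG EH) (pconst (real (card EG)))) (pmul p p)) r \<longrightarrow>
           pE L (pmul (psub (edge_poly EG EH) (pconst (real (card EG)))) (pmul p p)) \<ge> 0) \<and>
       psd_op L S r)"

end

theory Submission
  imports Defs "HOL-Library.List_Lexorder"
begin

text \<open>An isomorphism from \<open>G_C\<close> to \<open>G_{C^0}\<close> is translation by a solution \<open>z\<close> of \<open>C\<close>.  Replacing
  each variable \<open>\<Pi>[u \<mapsto> v]\<close> by the monomial in the \<open>A\<close>-variables saying that translation by \<open>z\<close>
  maps \<open>u\<close> to \<open>v\<close> (or by \<open>0\<close> if no translation does) turns a degree-\<open>r\<close> pseudo-expectation for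
  \<open>C\<close> into a functional on the isomorphism variables.  Monomials grow by a factor of at most three
  and squares go to squares, so positivity survives up to degree \<open>r/3\<close>.  Each isomorphism axiom
  times an admissible multiplier becomes a combination of 3XOR axioms times multipliers of degree
  at most \<open>r\<close>: row and column sums become \<open>A[x\<mapsto>0] + A[x\<mapsto>1] = 1\<close> or an equation constraint,
  and for a fixed edge of \<open>G_C\<close> the edges of \<open>G_{C^0}\<close> contribute exactly \<open>1\<close>.  Bounding the
  multipliers uses that degrees add under multiplication.\<close>

definition supp :: "'v rpoly \<Rightarrow> 'v multiset set" where
  "supp p = {m. p m \<noteq> 0}"

lemma in_supp [simp]: "m \<in> supp p \<longleftrightarrow> p m \<noteq> 0"
  by (simp add: supp_def)

lemma finite_supp_if_poly_over: "poly_over S p \<Longrightarrow> finite (supp p)"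
  by (simp add: poly_over_def supp_def)

definition pmon :: "'v multiset \<Rightarrow> 'v rpoly" where
  "pmon n = (\<lambda>m. if m = n then 1 else 0)"

lemma pvar_eq_pmon: "pvar v = pmon {#v#}"
  by (simp add: pvar_def pmon_def)

lemma pconst_eq: "pconst c = psmult c (pmon {#})"
  by (auto simp: pconst_def psmult_def pmon_def)

lemma supp_pmon [simp]: "supp (pmon n) = {n}"
  by (auto simp: pmon_def split: if_splits)

lemma finite_submultisets: "finite {a. a \<subseteq># (m::'v multiset)}"
proof -
  have "{a. a \<subseteq># m} \<subseteq> (\<Union>k\<in>{..size m}. multisets_of_size (set_mset m) k)"
    by (auto simp: multisets_of_size_def size_mset_mono dest: mset_subset_eqD)
  then show ?thesis
    by (rule finite_subset) auto
qed

lemma pmul_pmon_left: "pmul (pmon n) q m = (if n \<subseteq># m then q (m - n) else 0)"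
proof -
  have "pmul (pmon n) q m = (\<Sum>a\<in>{a. a \<subseteq># m}. if a = n then q (m - a) else 0)"
    unfolding pmul_def pmon_def by (rule sum.cong) auto
  then show ?thesis
    by (simp add: sum.delta[OF finite_submultisets])
qed

lemma pmul_pmon_pmon [simp]: "pmul (pmon a) (pmon b) = pmon (a + b)"
  by (rule ext) (simp only: pmul_pmon_left, auto simp: pmon_def)

lemma pmul_pvar_pvar: "pmul (pvar u) (pvar v) = pmon {#u, v#}"
  by (simp add: pvar_eq_pmon add_mset_commute)

lemma supp_pmul: "supp (pmul p q) \<subseteq> (\<lambda>(a, b). a + b) ` (supp p \<times> supp q)"
proof
  fix m assume "m \<in> supp (pmul p q)"
  then have "(\<Sum>a\<in>{a. a \<subseteq># m}. p a * q (m - a)) \<noteq> 0"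
    by (simp add: pmul_def)
  then obtain a where "a \<subseteq># m" "p a * q (m - a) \<noteq> 0"
    by (rule sum.not_neutral_contains_not_neutral) auto
  then show "m \<in> (\<lambda>(a, b). a + b) ` (supp p \<times> supp q)"
    by (intro image_eqI[where x = "(a, m - a)"]) auto
qed

lemma finite_supp_pmul [simp, intro]:
  "finite (supp p) \<Longrightarrow> finite (supp q) \<Longrightarrow> finite (supp (pmul p q))"
  by (rule finite_subset[OF supp_pmul]) auto

lemma finite_supp_pvar [simp, intro]: "finite (supp (pvar v))"
  by (simp add: pvar_eq_pmon)

lemma finite_supp_pconst [simp, intro]: "finite (supp (pconst c))"
  by (rule finite_subset[of _ "{{#}}"]) (auto simp: pconst_def split: if_splits)

lemma finite_supp_psub [simp, intro]:
  "finite (supp p) \<Longrightarrow> finite (supp q) \<Longrightarrow> finite (supp (psub p q))"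
  by (rule finite_subset[of _ "supp p \<union> supp q"]) (auto simp: psub_def)

lemma finite_supp_padd [simp, intro]:
  "finite (supp p) \<Longrightarrow> finite (supp q) \<Longrightarrow> finite (supp (padd p q))"
  by (rule finite_subset[of _ "supp p \<union> supp q"]) (auto simp: padd_def)

lemma finite_supp_psmult [simp, intro]: "finite (supp p) \<Longrightarrow> finite (supp (psmult c p))"
  by (rule finite_subset[of _ "supp p"]) (auto simp: psmult_def)

lemma supp_psum: "supp (psum I f) \<subseteq> (\<Union>i\<in>I. supp (f i))"
proof
  fix m assume "m \<in> supp (psum I f)"
  then have "(\<Sum>i\<in>I. f i m) \<noteq> 0"
    by (simp add: psum_def)
  then obtain i where "i \<in> I" "f i m \<noteq> 0"
    by (rule sum.not_neutral_contains_not_neutral)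
  then show "m \<in> (\<Union>i\<in>I. supp (f i))"
    by auto
qed

lemma finite_supp_psum [simp, intro]:
  "finite I \<Longrightarrow> (\<And>i. i \<in> I \<Longrightarrow> finite (supp (f i))) \<Longrightarrow> finite (supp (psum I f))"
  by (rule finite_subset[OF supp_psum]) auto

lemma pE_eq_sum_superset:
  assumes "finite F" "supp p \<subseteq> F"
  shows "pE L p = (\<Sum>m\<in>F. p m * L m)"
  unfolding pE_def supp_def[symmetric] by (rule sum.mono_neutral_left) (use assms in auto)

lemma pE_pmon [simp]: "pE L (pmon n) = L n"
  by (simp add: pE_def pmon_def)

lemma pE_pvar [simp]: "pE L (pvar v) = L {#v#}"
  by (simp add: pvar_eq_pmon)

lemma pE_psmult [simp]: "pE L (psmult c p) = c * pE L p"
  by (cases "c = 0") (simp_all add: pE_def psmult_def sum_distrib_left mult.assoc)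

lemma pE_pconst [simp]: "pE L (pconst c) = c * L {#}"
  by (simp add: pconst_eq)

lemma pE_psub [simp]:
  assumes "finite (supp p)" "finite (supp q)"
  shows "pE L (psub p q) = pE L p - pE L q"
proof -
  let ?F = "supp p \<union> supp q"
  have "pE L (psub p q) = (\<Sum>m\<in>?F. psub p q m * L m)"
    by (rule pE_eq_sum_superset) (use assms in \<open>auto simp: psub_def\<close>)
  also have "\<dots> = (\<Sum>m\<in>?F. p m * L m) - (\<Sum>m\<in>?F. q m * L m)"
    by (simp add: psub_def left_diff_distrib sum_subtractf)
  also have "\<dots> = pE L p - pE L q"
    using assms by (simp add: pE_eq_sum_superset[of ?F])
  finally show ?thesis .
qed

lemma pE_padd [simp]:
  assumes "finite (supp p)" "finite (supp q)"
  shows "pE L (padd p q) = pE L p + pE L q"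
proof -
  let ?F = "supp p \<union> supp q"
  have "pE L (padd p q) = (\<Sum>m\<in>?F. padd p q m * L m)"
    by (rule pE_eq_sum_superset) (use assms in \<open>auto simp: padd_def\<close>)
  also have "\<dots> = (\<Sum>m\<in>?F. p m * L m) + (\<Sum>m\<in>?F. q m * L m)"
    by (simp add: padd_def distrib_right sum.distrib)
  also have "\<dots> = pE L p + pE L q"
    using assms by (simp add: pE_eq_sum_superset[of ?F])
  finally show ?thesis .
qed

lemma pE_psum [simp]:
  assumes "finite I" "\<And>i. i \<in> I \<Longrightarrow> finite (supp (f i))"
  shows "pE L (psum I f) = (\<Sum>i\<in>I. pE L (f i))"
proof -
  let ?F = "\<Union>i\<in>I. supp (f i)"
  have F: "finite ?F"
    using assms by blast
  have "pE L (psum I f) = (\<Sum>m\<in>?F. psum I f m * L m)"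
    by (rule pE_eq_sum_superset[OF F supp_psum])
  also have "\<dots> = (\<Sum>i\<in>I. \<Sum>m\<in>?F. f i m * L m)"
    by (simp add: psum_def sum_distrib_right sum.swap[of _ ?F])
  also have "\<dots> = (\<Sum>i\<in>I. pE L (f i))"
    by (rule sum.cong[OF refl], rule pE_eq_sum_superset[symmetric, OF F]) auto
  finally show ?thesis .
qed

lemma pE_bool_generator:
  "pE h (psub (pmul (pvar v) (pvar v)) (pvar v)) = h {#v, v#} - h {#v#}"
  by (simp add: pmul_pvar_pvar)

lemma coeff_eq_pE:
  assumes "finite (supp p)"
  shows "p a = pE (\<lambda>m. if m = a then 1 else 0) p"
proof -
  have "pE (\<lambda>m. if m = a then 1 else 0) p = (\<Sum>m\<in>supp p. if m = a then p m else 0)"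
    unfolding pE_def supp_def[symmetric] by (rule sum.cong) auto
  also have "\<dots> = p a"
    using assms by (simp add: sum.delta)
  finally show ?thesis ..
qed

lemma pmul_eq_sum_pairs:
  assumes "finite (supp p)" "finite (supp q)"
  shows "pmul p q m = (\<Sum>x\<in>{x\<in>supp p \<times> supp q. fst x + snd x = m}. p (fst x) * q (snd x))"
proof -
  have "pmul p q m = (\<Sum>a\<in>{a. a \<subseteq># m \<and> p a \<noteq> 0 \<and> q (m - a) \<noteq> 0}. p a * q (m - a))"
    unfolding pmul_def by (rule sum.mono_neutral_right) (auto simp: finite_submultisets)
  also have "\<dots> = (\<Sum>x\<in>{x\<in>supp p \<times> supp q. fst x + snd x = m}. p (fst x) * q (snd x))"
    by (rule sum.reindex_bij_witness[where i = fst and j = "\<lambda>a. (a, m - a)"]) auto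
  finally show ?thesis .
qed

lemma pE_pmul_eq_double_sum:
  assumes fp: "finite (supp p)" and fq: "finite (supp q)"
  shows "pE L (pmul p q) = (\<Sum>a\<in>supp p. \<Sum>b\<in>supp q. p a * q b * L (a + b))"
proof -
  let ?T = "(\<lambda>(a, b). a + b) ` (supp p \<times> supp q)"
  have "pE L (pmul p q) = (\<Sum>m\<in>?T. pmul p q m * L m)"
    by (rule pE_eq_sum_superset[OF _ supp_pmul]) (use fp fq in auto)
  also have "\<dots> = (\<Sum>m\<in>?T. \<Sum>x\<in>{x\<in>supp p \<times> supp q. fst x + snd x = m}.
                     p (fst x) * q (snd x) * L (fst x + snd x))"
    by (rule sum.cong[OF refl]) (simp add: pmul_eq_sum_pairs[OF fp fq] sum_distrib_right)
  also have "\<dots> = (\<Sum>x\<in>supp p \<times> supp q. p (fst x) * q (snd x) * L (fst x + snd x))"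
    by (rule sum.group) (use fp fq in auto)
  also have "\<dots> = (\<Sum>a\<in>supp p. \<Sum>b\<in>supp q. p a * q b * L (a + b))"
    unfolding sum.cartesian_product by (rule sum.cong) auto
  finally show ?thesis .
qed

definition pmul_functional :: "('v multiset \<Rightarrow> real) \<Rightarrow> 'v rpoly \<Rightarrow> 'v multiset \<Rightarrow> real" where
  "pmul_functional L q a = pE (\<lambda>b. L (a + b)) q"

lemma pE_pmul:
  assumes "finite (supp g)" "finite (supp q)"
  shows "pE L (pmul g q) = pE (pmul_functional L q) g"
  unfolding pE_pmul_eq_double_sum[OF assms]
  by (simp add: pmul_functional_def pE_def supp_def[symmetric] sum_distrib_left mult.assoc)

lemma pmul_functional_pmul_pmon:
  assumes "finite (supp q)"
  shows "pmul_functional L (pmul (pmon n) q) a = pmul_functional L q (a + n)"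
  using assms by (simp add: pmul_functional_def pE_pmul add.assoc)

lemma deg_le_mono: "deg_le p k \<Longrightarrow> k \<le> k' \<Longrightarrow> deg_le p k'"
  by (auto simp: deg_le_def)

lemma deg_le_pmon [simp]: "deg_le (pmon n) k \<longleftrightarrow> size n \<le> k"
  by (auto simp: deg_le_def pmon_def)

lemma deg_le_pvar [simp]: "deg_le (pvar v) k \<longleftrightarrow> 1 \<le> k"
  by (simp add: pvar_eq_pmon)

lemma deg_le_pconst [simp]: "deg_le (pconst c) k"
  by (simp add: deg_le_def pconst_def)

lemma deg_le_psub [intro]: "deg_le p k \<Longrightarrow> deg_le q k \<Longrightarrow> deg_le (psub p q) k"
  unfolding deg_le_def psub_def by (metis diff_self)

lemma deg_le_padd [intro]: "deg_le p k \<Longrightarrow> deg_le q k \<Longrightarrow> deg_le (padd p q) k"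
  unfolding deg_le_def padd_def by (metis add.right_neutral)

lemma deg_le_psum [intro]: "(\<And>i. i \<in> I \<Longrightarrow> deg_le (f i) k) \<Longrightarrow> deg_le (psum I f) k"
  using supp_psum[of I f] by (fastforce simp: deg_le_def)

lemma deg_le_pmul:
  assumes "deg_le p k" "deg_le q l"
  shows "deg_le (pmul p q) (k + l)"
  unfolding deg_le_def
proof (intro allI impI)
  fix m assume "pmul p q m \<noteq> 0"
  then obtain a b where "m = a + b" "p a \<noteq> 0" "q b \<noteq> 0"
    using supp_pmul[of p q] by fastforce
  then show "size m \<le> k + l"
    using assms by (auto simp: deg_le_def intro: add_mono)
qed

lemma poly_over_pmon: "set_mset n \<subseteq> S \<Longrightarrow> poly_over S (pmon n)"
  by (auto simp: poly_over_def pmon_def)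

lemma poly_over_pmul:
  assumes "poly_over S p" "poly_over S q"
  shows "poly_over S (pmul p q)"
  unfolding poly_over_def
proof (intro conjI allI impI)
  show "finite {m. pmul p q m \<noteq> 0}"
    using finite_supp_pmul[of p q] assms by (simp add: poly_over_def supp_def)
next
  fix m assume "pmul p q m \<noteq> 0"
  then obtain a b where "m = a + b" "p a \<noteq> 0" "q b \<noteq> 0"
    using supp_pmul[of p q] by fastforce
  then show "set_mset m \<subseteq> S"
    using assms by (auto simp: poly_over_def)
qed

lemma sum_eq_sum_on_support:
  assumes "finite A" "D \<subseteq> A" "\<And>x. x \<in> A \<Longrightarrow> f x \<noteq> 0 \<Longrightarrow> x \<in> D"
  shows "sum f A = sum f D"
  by (rule sum.mono_neutral_right) (use assms in auto)

lemma annihilates_zero: "(\<And>m. g m = 0) \<Longrightarrow> annihilates L S d g"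
  by (simp add: annihilates_def pmul_def pE_def)

section \<open>Degree of a product\<close>

definition lex_key :: "'v list \<Rightarrow> 'v multiset \<Rightarrow> nat list" where
  "lex_key vs m = map (count m) vs"

lemma lex_key_add_less: "lex_key vs a < lex_key vs b \<Longrightarrow> lex_key vs (a + c) < lex_key vs (b + c)"
  unfolding lex_key_def by (induction vs) auto

lemma lex_key_add_le: "lex_key vs a \<le> lex_key vs b \<Longrightarrow> lex_key vs (a + c) \<le> lex_key vs (b + c)"
  using lex_key_add_less[of vs a b c]
  by (auto simp: order.order_iff_strict lex_key_def map_eq_conv)

lemma lex_key_inj:
  assumes "set_mset a \<subseteq> set vs" "set_mset b \<subseteq> set vs" "lex_key vs a = lex_key vs b"
  shows "a = b"
proof (rule multiset_eqI)
  fix x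
  show "count a x = count b x"
  proof (cases "x \<in> set vs")
    case True
    then obtain i where "i < length vs" "vs ! i = x"
      by (auto simp: in_set_conv_nth)
    then show ?thesis
      using assms(3) unfolding lex_key_def by (metis nth_map)
  next
    case False
    then show ?thesis
      using assms(1,2) by (metis count_eq_zero_iff subsetD)
  qed
qed

lemma ex_lex_key_max:
  assumes "finite A" "a0 \<in> A"
  obtains a1 where "a1 \<in> A" "\<And>a. a \<in> A \<Longrightarrow> lex_key vs a \<le> lex_key vs a1"
proof -
  have "Max (lex_key vs ` A) \<in> lex_key vs ` A"
    using assms by (intro Max_in) auto
  then show ?thesis
    using assms that by (metis (no_types, lifting) Max_ge finite_imageI image_iff)
qed

lemma lex_key_eq_if_add_eq:
  assumes ka: "lex_key vs a \<le> lex_key vs a1" and kb: "lex_key vs b \<le> lex_key vs b1"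
    and ab: "a + b = a1 + b1"
  shows "lex_key vs a = lex_key vs a1"
proof (rule ccontr)
  assume "lex_key vs a \<noteq> lex_key vs a1"
  then have "lex_key vs (a + b) < lex_key vs (a1 + b)"
    using ka by (intro lex_key_add_less) simp
  also have "\<dots> \<le> lex_key vs (a1 + b1)"
    using lex_key_add_le[OF kb, of a1] by (simp add: add.commute)
  finally show False
    using ab by simp
qed

lemma pmul_eq_single_term:
  assumes "\<And>a. a \<subseteq># a1 + b1 \<Longrightarrow> a \<noteq> a1 \<Longrightarrow> p a * q (a1 + b1 - a) = 0"
  shows "pmul p q (a1 + b1) = p a1 * q b1"
proof -
  have "pmul p q (a1 + b1) = p a1 * q b1 + (\<Sum>a\<in>{a. a \<subseteq># a1 + b1} - {a1}. p a * q (a1 + b1 - a))"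
    unfolding pmul_def by (subst sum.remove[OF finite_submultisets, of a1]) simp_all
  then show ?thesis
    using assms by (simp add: sum.neutral)
qed

text \<open>Among the top-degree monomials of \<open>p\<close> and of \<open>q\<close> take the lexicographically largest
  ones; their product arises in only one way as a product of a monomial of \<open>p\<close> and one of \<open>q\<close>,
  so its coefficient in \<open>pmul p q\<close> cannot cancel.\<close>

lemma pmul_top_degree_nonzero:
  assumes fp: "finite (supp p)" and fq: "finite (supp q)"
    and a0: "p a0 \<noteq> 0" and b0: "q b0 \<noteq> 0"
    and dp: "deg_le p (size a0)" and dq: "deg_le q (size b0)"
  shows "\<exists>m. size m = size a0 + size b0 \<and> pmul p q m \<noteq> 0"
proof -
  have "finite (\<Union>(set_mset ` (supp p \<union> supp q)))"
    using fp fq by (intro finite_UN_I) auto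
  then obtain vs where vs: "set vs = \<Union>(set_mset ` (supp p \<union> supp q))"
    using finite_list by blast
  define A where "A = {a\<in>supp p. size a = size a0}"
  define B where "B = {b\<in>supp q. size b = size b0}"
  obtain a1 where a1: "a1 \<in> A" "\<And>a. a \<in> A \<Longrightarrow> lex_key vs a \<le> lex_key vs a1"
    by (rule ex_lex_key_max[of A a0]) (use fp a0 in \<open>auto simp: A_def supp_def[symmetric]\<close>)
  obtain b1 where b1: "b1 \<in> B" "\<And>b. b \<in> B \<Longrightarrow> lex_key vs b \<le> lex_key vs b1"
    by (rule ex_lex_key_max[of B b0]) (use fq b0 in \<open>auto simp: B_def supp_def[symmetric]\<close>)
  have "pmul p q (a1 + b1) = p a1 * q b1"
  proof (rule pmul_eq_single_term, rule ccontr)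
    fix a assume a: "a \<subseteq># a1 + b1" "a \<noteq> a1" and nz: "p a * q (a1 + b1 - a) \<noteq> 0"
    define b where "b = a1 + b1 - a"
    have ab: "a + b = a1 + b1"
      using a(1) by (simp add: b_def)
    have "size a \<le> size a0" "size b \<le> size b0"
      using dp dq nz by (auto simp: deg_le_def b_def)
    moreover have "size a + size b = size a0 + size b0"
      using ab a1(1) b1(1) by (metis (mono_tags, lifting) A_def B_def mem_Collect_eq size_union)
    ultimately have "a \<in> A" "b \<in> B"
      using nz by (auto simp: A_def B_def b_def)
    then have "lex_key vs a = lex_key vs a1"
      using lex_key_eq_if_add_eq[OF a1(2) b1(2) ab] by simp
    moreover have "set_mset a \<subseteq> set vs" "set_mset a1 \<subseteq> set vs"
      using nz a1(1) vs by (auto simp: A_def)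
    ultimately show False
      using lex_key_inj a(2) by blast
  qed
  then show ?thesis
    using a1(1) b1(1) by (intro exI[of _ "a1 + b1"]) (simp add: A_def B_def)
qed

lemma ex_top_degree:
  assumes "finite (supp p)" "p a \<noteq> 0"
  obtains a' where "p a' \<noteq> 0" "size a \<le> size a'" "deg_le p (size a')"
proof -
  have "Max (size ` supp p) \<in> size ` supp p"
    using assms by (intro Max_in) auto
  then obtain a' where "p a' \<noteq> 0" "size a' = Max (size ` supp p)"
    by auto
  then show ?thesis
    using assms that by (auto simp: deg_le_def)
qed

lemma deg_le_pmul_sizes:
  assumes "finite (supp p)" "finite (supp q)" "deg_le (pmul p q) d" "p a \<noteq> 0" "q b \<noteq> 0"
  shows "size a + size b \<le> d"
proof -
  obtain a' where a': "p a' \<noteq> 0" "size a \<le> size a'" "deg_le p (size a')"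
    using ex_top_degree[OF assms(1,4)] .
  obtain b' where b': "q b' \<noteq> 0" "size b \<le> size b'" "deg_le q (size b')"
    using ex_top_degree[OF assms(2,5)] .
  obtain m where "size m = size a' + size b'" "pmul p q m \<noteq> 0"
    using pmul_top_degree_nonzero[OF assms(1,2) a'(1) b'(1) a'(3) b'(3)] by blast
  then show ?thesis
    using assms(3) a'(2) b'(2) by (auto simp: deg_le_def)
qed

section \<open>Substituting monomials for indeterminates\<close>

text \<open>\<open>\<phi> v = None\<close> means that the indeterminate \<open>v\<close> is replaced by \<open>0\<close>.\<close>

definition subst_defined :: "('u \<Rightarrow> 'w multiset option) \<Rightarrow> 'u multiset \<Rightarrow> bool" where
  "subst_defined \<phi> m \<longleftrightarrow> (\<forall>v\<in>#m. \<phi> v \<noteq> None)"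

definition subst_mon :: "('u \<Rightarrow> 'w multiset option) \<Rightarrow> 'u multiset \<Rightarrow> 'w multiset" where
  "subst_mon \<phi> m = \<Sum>\<^sub># (image_mset (\<lambda>v. the (\<phi> v)) m)"

definition subst :: "('u \<Rightarrow> 'w multiset option) \<Rightarrow> 'u rpoly \<Rightarrow> 'w rpoly" where
  "subst \<phi> p = (\<lambda>n. \<Sum>m\<in>supp p. if subst_defined \<phi> m \<and> subst_mon \<phi> m = n then p m else 0)"

definition pullback :: "('u \<Rightarrow> 'w multiset option) \<Rightarrow> ('w multiset \<Rightarrow> real) \<Rightarrow> 'u multiset \<Rightarrow> real" where
  "pullback \<phi> L m = (if subst_defined \<phi> m then L (subst_mon \<phi> m) else 0)"

lemma subst_defined_simps [simp]:
  "subst_defined \<phi> {#}"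
  "subst_defined \<phi> (add_mset v m) \<longleftrightarrow> \<phi> v \<noteq> None \<and> subst_defined \<phi> m"
  "subst_defined \<phi> (a + b) \<longleftrightarrow> subst_defined \<phi> a \<and> subst_defined \<phi> b"
  by (auto simp: subst_defined_def)

lemma subst_mon_simps [simp]:
  "subst_mon \<phi> {#} = {#}"
  "subst_mon \<phi> (add_mset v m) = the (\<phi> v) + subst_mon \<phi> m"
  "subst_mon \<phi> (a + b) = subst_mon \<phi> a + subst_mon \<phi> b"
  by (simp_all add: subst_mon_def)

lemma pullback_empty [simp]: "pullback \<phi> L {#} = L {#}"
  by (simp add: pullback_def)

lemma pullback_single: "pullback \<phi> T {#w#} = (case \<phi> w of None \<Rightarrow> 0 | Some M \<Rightarrow> T M)"
  by (auto simp: pullback_def split: option.split)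

lemma pullback_pair:
  "pullback \<phi> T {#w, w'#} =
     (case \<phi> w of None \<Rightarrow> 0 | Some M \<Rightarrow> (case \<phi> w' of None \<Rightarrow> 0 | Some M' \<Rightarrow> T (M + M')))"
  by (auto simp: pullback_def split: option.split)

lemma pullback_single_nonzero: "pullback \<phi> T {#w#} \<noteq> 0 \<Longrightarrow> \<phi> w \<noteq> None"
  by (auto simp: pullback_def split: if_splits)

lemma pullback_pair_nonzero:
  "pullback \<phi> T {#w, w'#} \<noteq> 0 \<Longrightarrow> \<phi> w \<noteq> None \<and> \<phi> w' \<noteq> None"
  by (auto simp: pullback_def split: if_splits)

lemma supp_subst: "supp (subst \<phi> p) \<subseteq> subst_mon \<phi> ` {m\<in>supp p. subst_defined \<phi> m}"
proof
  fix n assume "n \<in> supp (subst \<phi> p)"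
  then have "(\<Sum>m\<in>supp p. if subst_defined \<phi> m \<and> subst_mon \<phi> m = n then p m else 0) \<noteq> 0"
    by (simp add: subst_def)
  then obtain m where "m \<in> supp p" "(if subst_defined \<phi> m \<and> subst_mon \<phi> m = n then p m else 0) \<noteq> 0"
    by (rule sum.not_neutral_contains_not_neutral)
  then show "n \<in> subst_mon \<phi> ` {m\<in>supp p. subst_defined \<phi> m}"
    by (auto split: if_splits)
qed

lemma finite_supp_subst [simp, intro]: "finite (supp p) \<Longrightarrow> finite (supp (subst \<phi> p))"
  by (rule finite_subset[OF supp_subst], rule finite_imageI, rule finite_subset[of _ "supp p"]) auto

lemma pE_subst:
  assumes fp: "finite (supp p)"
  shows "pE L (subst \<phi> p) = pE (pullback \<phi> L) p"
proof -
  let ?T = "subst_mon \<phi> ` supp p"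
  have fT: "finite ?T"
    using fp by auto
  have "pE L (subst \<phi> p) = (\<Sum>c\<in>?T. subst \<phi> p c * L c)"
    by (rule pE_eq_sum_superset[OF fT]) (use supp_subst in blast)
  also have "\<dots> = (\<Sum>c\<in>?T. \<Sum>a\<in>supp p. if subst_defined \<phi> a \<and> subst_mon \<phi> a = c then p a * L c else 0)"
    unfolding subst_def sum_distrib_right by (intro sum.cong refl) simp
  also have "\<dots> = (\<Sum>a\<in>supp p. \<Sum>c\<in>?T. if subst_defined \<phi> a \<and> subst_mon \<phi> a = c then p a * L c else 0)"
    by (rule sum.swap)
  also have "\<dots> = (\<Sum>a\<in>supp p. p a * pullback \<phi> L a)"
    using fT by (intro sum.cong refl) (auto simp: pullback_def if_distrib[of "\<lambda>x. x * _"] sum.delta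
        cong: if_cong)
  also have "\<dots> = pE (pullback \<phi> L) p"
    by (simp add: pE_def supp_def)
  finally show ?thesis .
qed

lemma pmul_functional_pullback:
  assumes "finite (supp q)"
  shows "pmul_functional (pullback \<phi> L) q = pullback \<phi> (pmul_functional L (subst \<phi> q))"
proof
  fix a
  show "pmul_functional (pullback \<phi> L) q a = pullback \<phi> (pmul_functional L (subst \<phi> q)) a"
  proof (cases "subst_defined \<phi> a")
    case True
    then have "(\<lambda>b. pullback \<phi> L (a + b)) = pullback \<phi> (\<lambda>c. L (subst_mon \<phi> a + c))"
      by (auto simp: pullback_def)
    then show ?thesis
      using True assms by (simp add: pmul_functional_def pE_subst pullback_def)
  next
    case False
    then show ?thesis
      by (simp add: pmul_functional_def pullback_def pE_def)
  qed
qed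

lemma pE_pullback_pmul:
  assumes "finite (supp g)" "finite (supp q)"
  shows "pE (pullback \<phi> L) (pmul g q) = pE (pullback \<phi> (pmul_functional L (subst \<phi> q))) g"
  using assms by (simp add: pE_pmul pmul_functional_pullback)

lemma pE_pullback_square:
  assumes "finite (supp p)"
  shows "pE (pullback \<phi> L) (pmul p p) = pE L (pmul (subst \<phi> p) (subst \<phi> p))"
proof -
  have "pE (pullback \<phi> L) (pmul p p) = pE (pullback \<phi> (pmul_functional L (subst \<phi> p))) p"
    by (rule pE_pullback_pmul[OF assms assms])
  also have "\<dots> = pE (pmul_functional L (subst \<phi> p)) (subst \<phi> p)"
    using assms by (simp add: pE_subst)
  also have "\<dots> = pE L (pmul (subst \<phi> p) (subst \<phi> p))"
    using assms by (simp add: pE_pmul)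
  finally show ?thesis .
qed

lemma size_subst_mon:
  assumes "\<And>v M. \<phi> v = Some M \<Longrightarrow> size M \<le> c" "subst_defined \<phi> m"
  shows "size (subst_mon \<phi> m) \<le> c * size m"
  using assms(2)
proof (induction m)
  case (add v m)
  then obtain M where "\<phi> v = Some M"
    by auto
  then show ?case
    using add assms(1) by (auto intro: add_mono)
qed simp

lemma deg_le_subst:
  assumes "deg_le p k" "\<And>v M. \<phi> v = Some M \<Longrightarrow> size M \<le> c"
  shows "deg_le (subst \<phi> p) (c * k)"
  unfolding deg_le_def
proof (intro allI impI)
  fix n assume "subst \<phi> p n \<noteq> 0"
  then obtain m where m: "p m \<noteq> 0" "subst_defined \<phi> m" "subst_mon \<phi> m = n"
    using supp_subst[of \<phi> p] by fastforce
  then have "size n \<le> c * size m"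
    using size_subst_mon[of \<phi> c m] assms(2) by blast
  also have "\<dots> \<le> c * k"
    using m(1) assms(1) by (auto simp: deg_le_def)
  finally show "size n \<le> c * k" .
qed

lemma poly_over_subst:
  assumes "poly_over S p" "\<And>v M. v \<in> S \<Longrightarrow> \<phi> v = Some M \<Longrightarrow> set_mset M \<subseteq> S'"
  shows "poly_over S' (subst \<phi> p)"
  unfolding poly_over_def
proof (intro conjI allI impI)
  show "finite {m. subst \<phi> p m \<noteq> 0}"
    using finite_supp_subst[OF finite_supp_if_poly_over[OF assms(1)]] by (simp add: supp_def)
next
  fix n assume "subst \<phi> p n \<noteq> 0"
  then obtain m where m: "p m \<noteq> 0" "subst_defined \<phi> m" "subst_mon \<phi> m = n"
    using supp_subst[of \<phi> p] by fastforce
  have "set_mset m \<subseteq> S"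
    using m(1) assms(1) by (auto simp: poly_over_def)
  then have "set_mset (subst_mon \<phi> m) \<subseteq> S'"
    using m(2) by (induction m) (auto, meson assms(2) subsetD)
  then show "set_mset n \<subseteq> S'"
    using m(3) by simp
qed

lemma annihilates_imp_pmul_functional:
  assumes "annihilates L S r g" "finite (supp g)" "deg_le g e"
    and "poly_over S Q" "deg_le Q k" "set_mset n \<subseteq> S" "e + size n + k \<le> r"
  shows "pE (\<lambda>a. pmul_functional L Q (a + n)) g = 0"
proof -
  let ?q = "pmul (pmon n) Q"
  have Q: "finite (supp Q)"
    using assms(4) by (rule finite_supp_if_poly_over)
  have "poly_over S ?q"
    using assms(4,6) by (intro poly_over_pmul poly_over_pmon)
  moreover have "deg_le (pmul g ?q) (e + (size n + k))"
    using assms(3,5) by (intro deg_le_pmul) simp_all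
  then have "deg_le (pmul g ?q) r"
    by (rule deg_le_mono) (use assms(7) in simp)
  ultimately have "pE L (pmul g ?q) = 0"
    using assms(1) by (simp add: annihilates_def)
  moreover have "pE L (pmul g ?q) = pE (pmul_functional L ?q) g"
    using assms(2) Q by (simp add: pE_pmul)
  moreover have "pmul_functional L ?q = (\<lambda>a. pmul_functional L Q (a + n))"
    using Q by (simp add: pmul_functional_pmul_pmon fun_eq_iff)
  ultimately show ?thesis
    by simp
qed

text \<open>A nonzero coefficient of \<open>g\<close> at \<open>a\<close> bounds the degree of any admissible multiplier \<open>q\<close> by
  \<open>d - size a\<close>, because degrees add under multiplication.\<close>

lemma annihilates_pullback:
  assumes size: "\<And>v M. \<phi> v = Some M \<Longrightarrow> size M \<le> c"
    and into: "\<And>v M. v \<in> S \<Longrightarrow> \<phi> v = Some M \<Longrightarrow> set_mset M \<subseteq> S'"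
    and g: "finite (supp g)" "g a \<noteq> 0"
    and zero: "\<And>Q. poly_over S' Q \<Longrightarrow> deg_le Q (c * (d - size a)) \<Longrightarrow> size a \<le> d \<Longrightarrow>
                  pE (pullback \<phi> (pmul_functional L Q)) g = 0"
  shows "annihilates (pullback \<phi> L) S d g"
  unfolding annihilates_def
proof (intro allI impI)
  fix q assume q: "poly_over S q" and dq: "deg_le (pmul g q) d"
  have fq: "finite (supp q)"
    using q by (rule finite_supp_if_poly_over)
  show "pE (pullback \<phi> L) (pmul g q) = 0"
  proof (cases "\<exists>b. q b \<noteq> 0")
    case True
    then obtain b where b: "q b \<noteq> 0" ..
    have "size a \<le> d"
      using deg_le_pmul_sizes[OF g(1) fq dq g(2) b] by simp
    moreover have "deg_le q (d - size a)"
      unfolding deg_le_def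
    proof (intro allI impI)
      fix b' assume "q b' \<noteq> 0"
      then have "size a + size b' \<le> d"
        by (rule deg_le_pmul_sizes[OF g(1) fq dq g(2)])
      then show "size b' \<le> d - size a"
        by simp
    qed
    ultimately show ?thesis
      using g(1) fq q by (simp add: pE_pullback_pmul zero deg_le_subst[OF _ size]
          poly_over_subst[OF _ into])
  next
    case False
    then show ?thesis
      by (simp add: pE_def pmul_def)
  qed
qed

definition eq_var :: "'x xor_eq \<Rightarrow> nat \<Rightarrow> 'x" where
  "eq_var e j = (if j = 1 then ev1 e else if j = 2 then ev2 e else ev3 e)"

definition assign_val :: "bool \<times> bool \<times> bool \<Rightarrow> nat \<Rightarrow> bool" where
  "assign_val \<gamma> j = (if j = 1 then fst \<gamma> else if j = 2 then fst (snd \<gamma>) else snd (snd \<gamma>))"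

definition assign_mon :: "'x xor_eq \<Rightarrow> bool \<times> bool \<times> bool \<Rightarrow> ('x \<times> bool) multiset" where
  "assign_mon e \<gamma> = image_mset (\<lambda>j. (eq_var e j, assign_val \<gamma> j)) {#1, 2, 3#}"

lemma assign_mon_eq: "assign_mon e (a1, a2, a3) = {#(ev1 e, a1), (ev2 e, a2), (ev3 e, a3)#}"
  by (simp add: assign_mon_def eq_var_def assign_val_def)

lemma size_assign_mon [simp]: "size (assign_mon e \<gamma>) = 3"
  by (simp add: assign_mon_def)

lemma literal_in_assign_mon: "j \<in> {1, 2, 3} \<Longrightarrow> (eq_var e j, assign_val \<gamma> j) \<in># assign_mon e \<gamma>"
  by (auto simp: assign_mon_def)

lemma assign_val_eqI:
  assumes "\<And>j. j \<in> {1, 2, 3} \<Longrightarrow> assign_val \<gamma> j = assign_val \<gamma>' j"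
  shows "\<gamma> = \<gamma>'"
  using assms[of 1] assms[of 2] assms[of 3] by (simp add: assign_val_def prod_eq_iff)

lemma eq_poly_eq: "eq_poly e = psub (psum {\<gamma>. sat3 e \<gamma>} (\<lambda>\<gamma>. pmon (assign_mon e \<gamma>))) (pconst 1)"
proof -
  obtain x1 x2 x3 b where e: "e = (x1, x2, x3, b)"
    by (cases e) auto
  have "(\<lambda>(a1, a2, a3). pmul (pvar (x1, a1)) (pmul (pvar (x2, a2)) (pvar (x3, a3))))
      = (\<lambda>\<gamma>. pmon (assign_mon e \<gamma>))"
    by (auto simp: e assign_mon_eq pvar_eq_pmon add_mset_commute)
  then show ?thesis
    by (simp add: e)
qed

lemma eq_ok_nth: "xor3_instance X cs \<Longrightarrow> i < length cs \<Longrightarrow> eq_ok X (cs ! i)"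
  by (simp add: xor3_instance_def)

lemma eq_var_mem: "eq_ok X e \<Longrightarrow> j \<in> {1, 2, 3} \<Longrightarrow> eq_var e j \<in> X"
  by (cases e) (auto simp: eq_var_def)

lemma eq_var_inj:
  "eq_ok X e \<Longrightarrow> j \<in> {1, 2, 3} \<Longrightarrow> j' \<in> {1, 2, 3} \<Longrightarrow> eq_var e j = eq_var e j' \<Longrightarrow> j = j'"
  by (cases e) (auto simp: eq_var_def)

lemma assign_mon_subset: "eq_ok X e \<Longrightarrow> set_mset (assign_mon e \<gamma>) \<subseteq> X \<times> UNIV"
  by (cases e; cases \<gamma>) (auto simp: assign_mon_eq)

lemma finite_sat3 [simp, intro]: "finite {\<gamma>. sat3 e \<gamma>}"
  by (rule finite_subset[of _ UNIV]) auto

fun parity :: "bool \<times> bool \<times> bool \<Rightarrow> bool" where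
  "parity (a1, a2, a3) = ((a1 \<noteq> a2) \<noteq> a3)"

fun xor_assign :: "bool \<times> bool \<times> bool \<Rightarrow> bool \<times> bool \<times> bool \<Rightarrow> bool \<times> bool \<times> bool" where
  "xor_assign (a1, a2, a3) (b1, b2, b3) = (a1 \<noteq> b1, a2 \<noteq> b2, a3 \<noteq> b3)"

fun rhs :: "'x xor_eq \<Rightarrow> bool" where
  "rhs (x1, x2, x3, b) = b"

lemma sat3_iff_parity: "sat3 e \<alpha> \<longleftrightarrow> parity \<alpha> = rhs e"
  by (cases e; cases \<alpha>) auto

lemma xor_assign_cancel [simp]:
  "xor_assign \<alpha> (xor_assign \<alpha> \<beta>) = \<beta>"
  "xor_assign (xor_assign \<alpha> \<beta>) \<beta> = \<alpha>"
  by (cases \<alpha>; cases \<beta>; auto)+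

lemma xor_assign_eq_iff [simp]:
  "xor_assign \<alpha> \<beta> = xor_assign \<alpha> \<beta>' \<longleftrightarrow> \<beta> = \<beta>'"
  "xor_assign \<alpha> \<beta> = xor_assign \<alpha>' \<beta> \<longleftrightarrow> \<alpha> = \<alpha>'"
  by (metis xor_assign_cancel(1), metis xor_assign_cancel(2))

lemma parity_xor_assign: "parity (xor_assign \<alpha> \<beta>) = (parity \<alpha> \<noteq> parity \<beta>)"
  by (cases \<alpha>; cases \<beta>) auto

lemma assign_val_xor_assign: "assign_val (xor_assign \<alpha> \<beta>) j = (assign_val \<alpha> j \<noteq> assign_val \<beta> j)"
  by (cases \<alpha>; cases \<beta>) (auto simp: assign_val_def)

lemma sum_xor_assign_left:
  "(\<Sum>\<beta>\<in>{\<beta>. parity \<beta> = p}. f (xor_assign \<alpha> \<beta>)) = (\<Sum>\<gamma>\<in>{\<gamma>. parity \<gamma> = (parity \<alpha> \<noteq> p)}. f \<gamma>)"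
  by (rule sum.reindex_bij_witness[where i = "xor_assign \<alpha>" and j = "xor_assign \<alpha>"])
    (auto simp: parity_xor_assign)

lemma sum_xor_assign_right:
  "(\<Sum>\<alpha>\<in>{\<alpha>. parity \<alpha> = p}. f (xor_assign \<alpha> \<beta>)) = (\<Sum>\<gamma>\<in>{\<gamma>. parity \<gamma> = (p \<noteq> parity \<beta>)}. f \<gamma>)"
  by (rule sum.reindex_bij_witness[where i = "\<lambda>\<gamma>. xor_assign \<gamma> \<beta>" and j = "\<lambda>\<alpha>. xor_assign \<alpha> \<beta>"])
    (auto simp: parity_xor_assign)

lemma length_homog [simp]: "length (homog cs) = length cs"
  by (simp add: homog_def)

lemma homog_nth:
  "i < length cs \<Longrightarrow> homog cs ! i = (ev1 (cs ! i), ev2 (cs ! i), ev3 (cs ! i), False)"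
  by (cases "cs ! i") (simp add: homog_def)

lemma homog_nth_simps [simp]:
  assumes "i < length cs"
  shows "eq_var (homog cs ! i) j = eq_var (cs ! i) j"
    and "assign_mon (homog cs ! i) \<gamma> = assign_mon (cs ! i) \<gamma>"
  using assms by (simp_all add: homog_nth eq_var_def assign_mon_def)

lemma sat3_homog_nth: "i < length cs \<Longrightarrow> sat3 (homog cs ! i) \<beta> \<longleftrightarrow> \<not> parity \<beta>"
  by (simp add: sat3_iff_parity homog_nth)

lemma xor3_instance_homog:
  assumes "xor3_instance X cs"
  shows "xor3_instance X (homog cs)"
  unfolding xor3_instance_def
proof (intro conjI ballI)
  show "finite X"
    using assms by (simp add: xor3_instance_def)
next
  fix e assume "e \<in> set (homog cs)"
  then obtain x1 x2 x3 b where "(x1, x2, x3, b) \<in> set cs" "e = (x1, x2, x3, False)"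
    by (auto simp: homog_def)
  then show "eq_ok X e"
    using assms by (auto simp: xor3_instance_def)
qed

lemma mem_gc_verts [simp]:
  "VarV x a \<in> gc_verts X cs \<longleftrightarrow> x \<in> X"
  "ConV i \<alpha> \<in> gc_verts X cs \<longleftrightarrow> i < length cs \<and> sat3 (cs ! i) \<alpha>"
  by (auto simp: gc_verts_def) (metis prod_cases3)

lemma literal_eq_iff:
  "(y, c) = (ev1 e, a1) \<or> (y, c) = (ev2 e, a2) \<or> (y, c) = (ev3 e, a3) \<longleftrightarrow>
   (\<exists>j\<in>{1, 2, 3}. y = eq_var e j \<and> c = assign_val (a1, a2, a3) j)"
  by (auto simp: eq_var_def assign_val_def)

lemma constraint_literal_edges:
  "{{ConV i (a1, a2, a3), VarV y c} | i a1 a2 a3 y c.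
      i < length cs \<and> sat3 (cs ! i) (a1, a2, a3) \<and>
      ((y, c) = (ev1 (cs ! i), a1) \<or> (y, c) = (ev2 (cs ! i), a2) \<or> (y, c) = (ev3 (cs ! i), a3))}
   = {{ConV i \<alpha>, VarV (eq_var (cs ! i) j) (assign_val \<alpha> j)} | i \<alpha> j.
      i < length cs \<and> sat3 (cs ! i) \<alpha> \<and> j \<in> {1, 2, 3}}"
  (is "?A = ?B")
proof (intro set_eqI iffI)
  fix E assume "E \<in> ?A"
  then obtain i a1 a2 a3 y c where "E = {ConV i (a1, a2, a3), VarV y c}" "i < length cs"
      "sat3 (cs ! i) (a1, a2, a3)"
      "\<exists>j\<in>{1, 2, 3}. y = eq_var (cs ! i) j \<and> c = assign_val (a1, a2, a3) j"
    unfolding literal_eq_iff by blast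
  then show "E \<in> ?B"
    by blast
next
  fix E assume "E \<in> ?B"
  then obtain i \<alpha> j where E: "E = {ConV i \<alpha>, VarV (eq_var (cs ! i) j) (assign_val \<alpha> j)}"
      and i: "i < length cs" "sat3 (cs ! i) \<alpha>" "j \<in> {1, 2, 3}"
    by blast
  obtain a1 a2 a3 where \<alpha>: "\<alpha> = (a1, a2, a3)"
    by (cases \<alpha>)
  have "(eq_var (cs ! i) j, assign_val \<alpha> j) = (ev1 (cs ! i), a1) \<or>
      (eq_var (cs ! i) j, assign_val \<alpha> j) = (ev2 (cs ! i), a2) \<or>
      (eq_var (cs ! i) j, assign_val \<alpha> j) = (ev3 (cs ! i), a3)"
    unfolding literal_eq_iff \<alpha> using i(3) by blast
  then show "E \<in> ?A"
    using E i unfolding \<alpha> by blast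
qed

lemma mem_gc_edges:
  "E \<in> gc_edges X cs \<longleftrightarrow>
     (\<exists>x\<in>X. E = {VarV x False, VarV x True}) \<or>
     (\<exists>i \<alpha> \<beta>. i < length cs \<and> sat3 (cs ! i) \<alpha> \<and> sat3 (cs ! i) \<beta> \<and> \<alpha> \<noteq> \<beta> \<and>
        E = {ConV i \<alpha>, ConV i \<beta>}) \<or>
     (\<exists>i \<alpha> j. i < length cs \<and> sat3 (cs ! i) \<alpha> \<and> j \<in> {1, 2, 3} \<and>
        E = {ConV i \<alpha>, VarV (eq_var (cs ! i) j) (assign_val \<alpha> j)})"
  unfolding gc_edges_def constraint_literal_edges by blast

lemma gc_edges_intros:
  "x \<in> X \<Longrightarrow> {VarV x False, VarV x True} \<in> gc_edges X cs"
  "i < length cs \<Longrightarrow> sat3 (cs ! i) \<alpha> \<Longrightarrow> sat3 (cs ! i) \<beta> \<Longrightarrow> \<alpha> \<noteq> \<beta> \<Longrightarrow>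
     {ConV i \<alpha>, ConV i \<beta>} \<in> gc_edges X cs"
  "i < length cs \<Longrightarrow> sat3 (cs ! i) \<alpha> \<Longrightarrow> j \<in> {1, 2, 3} \<Longrightarrow>
     {ConV i \<alpha>, VarV (eq_var (cs ! i) j) (assign_val \<alpha> j)} \<in> gc_edges X cs"
  unfolding mem_gc_edges by blast+

lemma literal_edge_iff:
  "{ConV i \<beta>, VarV y c} \<in> gc_edges X cs \<longleftrightarrow>
     i < length cs \<and> sat3 (cs ! i) \<beta> \<and> (\<exists>j\<in>{1, 2, 3}. y = eq_var (cs ! i) j \<and> c = assign_val \<beta> j)"
proof
  assume "{ConV i \<beta>, VarV y c} \<in> gc_edges X cs"
  then show "i < length cs \<and> sat3 (cs ! i) \<beta> \<and>
      (\<exists>j\<in>{1, 2, 3}. y = eq_var (cs ! i) j \<and> c = assign_val \<beta> j)"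
    unfolding mem_gc_edges
  proof (elim disjE bexE exE conjE)
    fix i' \<alpha> j assume h: "i' < length cs" "sat3 (cs ! i') \<alpha>" "j \<in> {1, 2, 3}"
      "{ConV i \<beta>, VarV y c} = {ConV i' \<alpha>, VarV (eq_var (cs ! i') j) (assign_val \<alpha> j)}"
    then have "i' = i" "\<alpha> = \<beta>" "y = eq_var (cs ! i') j" "c = assign_val \<alpha> j"
      by (simp_all add: doubleton_eq_iff)
    then show ?thesis
      using h by blast
  qed (simp_all add: doubleton_eq_iff)
next
  assume "i < length cs \<and> sat3 (cs ! i) \<beta> \<and>
    (\<exists>j\<in>{1, 2, 3}. y = eq_var (cs ! i) j \<and> c = assign_val \<beta> j)"
  then show "{ConV i \<beta>, VarV y c} \<in> gc_edges X cs"
    using gc_edges_intros(3) by blast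
qed

lemma gc_edges_doubleton:
  assumes "E \<in> gc_edges X cs"
  shows "\<exists>u u'. u \<noteq> u' \<and> E = {u, u'}"
  using assms unfolding mem_gc_edges
proof (elim disjE bexE exE conjE)
  fix x assume "E = {VarV x False, VarV x True}"
  then show ?thesis
    by (intro exI[of _ "VarV x False"] exI[of _ "VarV x True"]) simp
next
  fix i \<alpha> \<beta> assume "\<alpha> \<noteq> \<beta>" "E = {ConV i \<alpha>, ConV i \<beta>}"
  then show ?thesis
    by (intro exI[of _ "ConV i \<alpha>"] exI[of _ "ConV i \<beta>"]) simp
next
  fix i \<alpha> j assume "E = {ConV i \<alpha>, VarV (eq_var (cs ! i) j) (assign_val \<alpha> j)}"
  then show ?thesis
    by (intro exI[of _ "ConV i \<alpha>"] exI[of _ "VarV (eq_var (cs ! i) j) (assign_val \<alpha> j)"]) simp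
qed

lemma gc_edges_distinct: "{v, v'} \<in> gc_edges X cs \<Longrightarrow> v \<noteq> v'"
  using gc_edges_doubleton[of "{v, v'}" X cs] by (auto simp: doubleton_eq_iff)

lemma gc_edges_subset_verts:
  assumes "\<forall>e\<in>set cs. eq_ok X e" "E \<in> gc_edges X cs"
  shows "E \<subseteq> gc_verts X cs"
  using assms(2) unfolding mem_gc_edges
proof (elim disjE bexE exE conjE)
  fix i \<alpha> j assume "i < length cs" "sat3 (cs ! i) \<alpha>" "j \<in> {1, 2, 3}"
    "E = {ConV i \<alpha>, VarV (eq_var (cs ! i) j) (assign_val \<alpha> j)}"
  moreover have "eq_var (cs ! i) j \<in> X"
    using calculation assms(1) by (intro eq_var_mem) auto
  ultimately show ?thesis
    by simp
qed simp_all

lemma nonempty_if_vertex: "xor3_instance X cs \<Longrightarrow> u \<in> gc_verts X cs \<Longrightarrow> \<exists>x. x \<in> X"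
  by (cases u) (auto intro: eq_var_mem[OF eq_ok_nth, of _ _ _ 1])

lemma finite_gc_verts: "finite X \<Longrightarrow> finite (gc_verts X cs)"
proof -
  assume "finite X"
  have "gc_verts X cs \<subseteq>
      (\<lambda>(x, a). VarV x a) ` (X \<times> UNIV) \<union> (\<lambda>(i, \<alpha>). ConV i \<alpha>) ` ({..<length cs} \<times> UNIV)"
    by (auto simp: gc_verts_def)
  then show ?thesis
    by (rule finite_subset) (use \<open>finite X\<close> in auto)
qed

lemma finite_gc_edges: "xor3_instance X cs \<Longrightarrow> finite (gc_edges X cs)"
  by (rule finite_subset[of _ "Pow (gc_verts X cs)"])
    (auto simp: xor3_instance_def finite_gc_verts dest: gc_edges_subset_verts)

lemma finite_ordered_edges: "xor3_instance X cs \<Longrightarrow> finite {(u, u'). {u, u'} \<in> gc_edges X cs}"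
  by (rule finite_subset[of _ "gc_verts X cs \<times> gc_verts X cs"])
    (auto simp: xor3_instance_def finite_gc_verts dest: gc_edges_subset_verts)

lemma card_ordered_pairs:
  assumes "finite E" "\<And>e. e \<in> E \<Longrightarrow> \<exists>u u'. u \<noteq> u' \<and> e = {u, u'}"
  shows "card {(u, u'). {u, u'} \<in> E} = 2 * card E"
proof -
  have two: "card {(u, u'). {u, u'} = e} = 2" if e: "e \<in> E" for e
  proof -
    obtain u u' where "u \<noteq> u'" "e = {u, u'}"
      using assms(2)[OF e] by blast
    then have "{(v, v'). {v, v'} = e} = {(u, u'), (u', u)}"
      by (auto simp: doubleton_eq_iff)
    then show ?thesis
      using \<open>u \<noteq> u'\<close> by simp
  qed
  have "{(u, u'). {u, u'} \<in> E} = (\<Union>e\<in>E. {(u, u'). {u, u'} = e})"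
    by auto
  also have "card \<dots> = (\<Sum>e\<in>E. card {(u, u'). {u, u'} = e})"
  proof (rule card_UN_disjoint[OF assms(1)])
    show "\<forall>e\<in>E. finite {(u, u'). {u, u'} = e}"
      using two by (metis card.infinite zero_neq_numeral)
  qed auto
  finally show ?thesis
    using two by simp
qed

lemma finite_supp_edge_poly:
  assumes "finite {(u, u'). {u, u'} \<in> EG}" "finite {(v, v'). {v, v'} \<in> EH}"
  shows "finite (supp (edge_poly EG EH))"
  using assms by (simp add: edge_poly_def case_prod_beta)

lemma pE_edge_poly:
  assumes "finite {(u, u'). {u, u'} \<in> EG}" "finite {(v, v'). {v, v'} \<in> EH}"
  shows "pE h (edge_poly EG EH) =
    1 / 2 * (\<Sum>(u, u')\<in>{(u, u'). {u, u'} \<in> EG}.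
               \<Sum>(v, v')\<in>{(v, v'). {v, v'} \<in> EH}. h {#(u, v), (u', v')#})"
  using assms by (simp add: edge_poly_def case_prod_beta pmul_pvar_pvar)

lemma edge_poly_coeff_pos:
  assumes fin: "finite {(u, u'). {u, u'} \<in> EG}" "finite {(v, v'). {v, v'} \<in> EH}"
    and e: "{u, u'} \<in> EG" "{v, v'} \<in> EH"
  shows "0 < edge_poly EG EH {#(u, v), (u', v')#}"
proof -
  let ?ind = "\<lambda>m. if m = {#(u, v), (u', v')#} then 1 else (0 :: real)"
  have "?ind {#(u, v), (u', v')#} \<le> (\<Sum>(w, w')\<in>{(v, v'). {v, v'} \<in> EH}. ?ind {#(u, w), (u', w')#})"
    using member_le_sum[of "(v, v')" _ "\<lambda>(w, w'). ?ind {#(u, w), (u', w')#}"] e(2) fin(2)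
    by (simp add: case_prod_beta)
  also have "\<dots> \<le> (\<Sum>(t, t')\<in>{(u, u'). {u, u'} \<in> EG}.
                       \<Sum>(w, w')\<in>{(v, v'). {v, v'} \<in> EH}. ?ind {#(t, w), (t', w')#})"
    using member_le_sum[of "(u, u')" _
        "\<lambda>(t, t'). \<Sum>(w, w')\<in>{(v, v'). {v, v'} \<in> EH}. ?ind {#(t, w), (t', w')#}"] e(1) fin
    by (simp add: sum_nonneg case_prod_beta)
  finally show ?thesis
    using fin by (subst coeff_eq_pE) (simp_all add: finite_supp_edge_poly pE_edge_poly)
qed

section \<open>Translating the isomorphism variables\<close>

text \<open>\<open>\<Pi>[(x\<mapsto>a) \<mapsto> (x\<mapsto>b)]\<close> becomes \<open>A[x \<mapsto> a + b]\<close> and \<open>\<Pi>[\<alpha>\<^sub>C \<mapsto> \<beta>\<^sub>C]\<close> becomes the monomial of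
  the assignment \<open>\<alpha> + \<beta>\<close> to the variables of \<open>C\<close>: in both cases the condition on a solution \<open>z\<close>
  that translation by \<open>z\<close> maps the first vertex to the second.\<close>

fun graph_subst :: "'x xor_eq list \<Rightarrow> 'x gvert \<times> 'x gvert \<Rightarrow> ('x \<times> bool) multiset option" where
  "graph_subst cs (VarV x a, VarV y b) = (if x = y then Some {#(x, a \<noteq> b)#} else None)"
| "graph_subst cs (ConV i \<alpha>, ConV j \<beta>) =
     (if i = j then Some (assign_mon (cs ! i) (xor_assign \<alpha> \<beta>)) else None)"
| "graph_subst cs (VarV x a, ConV j \<beta>) = None"
| "graph_subst cs (ConV i \<alpha>, VarV y b) = None"

lemma size_graph_subst: "graph_subst cs w = Some M \<Longrightarrow> size M \<le> 3"
  by (cases "(cs, w)" rule: graph_subst.cases) (auto split: if_splits)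

lemma graph_subst_defined_iff:
  "graph_subst cs (VarV x a, v) \<noteq> None \<longleftrightarrow> (\<exists>b. v = VarV x b)"
  "graph_subst cs (ConV i \<alpha>, v) \<noteq> None \<longleftrightarrow> (\<exists>\<beta>. v = ConV i \<beta>)"
  "graph_subst cs (u, VarV x b) \<noteq> None \<longleftrightarrow> (\<exists>a. u = VarV x a)"
  "graph_subst cs (u, ConV i \<beta>) \<noteq> None \<longleftrightarrow> (\<exists>\<alpha>. u = ConV i \<alpha>)"
  by (cases u; cases v; auto)+

lemma graph_subst_subset:
  assumes "xor3_instance X cs" "u \<in> gc_verts X cs" "graph_subst cs (u, v) = Some M"
  shows "set_mset M \<subseteq> X \<times> UNIV"
proof (cases "(cs, u, v)" rule: graph_subst.cases)
  case (2 cs' i \<alpha> j \<beta>)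
  then have "i < length cs" "M = assign_mon (cs ! i) (xor_assign \<alpha> \<beta>)"
    using assms by (simp_all split: if_splits)
  then show ?thesis
    by (simp add: assign_mon_subset eq_ok_nth[OF assms(1)])
qed (use assms in \<open>auto split: if_splits\<close>)

text \<open>The identities that a pseudo-expectation of degree \<open>s\<close> for the instance imposes on its
  values at monomials, each axiom being multiplied by an arbitrary monomial \<open>n\<close>.\<close>

locale xor_identities =
  fixes X :: "'x set" and cs :: "'x xor_eq list" and s :: nat
    and T :: "('x \<times> bool) multiset \<Rightarrow> real"
  assumes xor_instance: "xor3_instance X cs"
    and idem: "\<And>x a n. x \<in> X \<Longrightarrow> set_mset n \<subseteq> X \<times> UNIV \<Longrightarrow> size n + 2 \<le> s \<Longrightarrow>
                 T (add_mset (x, a) (add_mset (x, a) n)) = T (add_mset (x, a) n)"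
    and split_var: "\<And>x n. x \<in> X \<Longrightarrow> set_mset n \<subseteq> X \<times> UNIV \<Longrightarrow> size n + 1 \<le> s \<Longrightarrow>
                 T (add_mset (x, False) n) + T (add_mset (x, True) n) = T n"
    and split_eq: "\<And>e n. e \<in> set cs \<Longrightarrow> set_mset n \<subseteq> X \<times> UNIV \<Longrightarrow> size n + 3 \<le> s \<Longrightarrow>
                 (\<Sum>\<gamma>\<in>{\<gamma>. sat3 e \<gamma>}. T (assign_mon e \<gamma> + n)) = T n"

lemma xor_identities_pmul_functional:
  assumes inst: "xor3_instance X cs" and L: "xor_pseudo_exp X cs r L"
    and Q: "poly_over (X \<times> UNIV) Q" "deg_le Q k"
  shows "xor_identities X cs (r - k) (pmul_functional L Q)"
proof -
  let ?S = "X \<times> (UNIV :: bool set)"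
  let ?T = "pmul_functional L Q"
  have ann: "\<forall>x\<in>X. \<forall>a. annihilates L ?S r (psub (pmul (pvar (x, a)) (pvar (x, a))) (pvar (x, a)))"
    "\<forall>x\<in>X. annihilates L ?S r (psub (padd (pvar (x, False)) (pvar (x, True))) (pconst 1))"
    "\<forall>e\<in>set cs. annihilates L ?S r (eq_poly e)"
    using L by (simp_all add: xor_pseudo_exp_def Let_def)
  have zero: "pE (\<lambda>a. ?T (a + n)) g = 0"
    if "annihilates L ?S r g" "finite (supp g)" "deg_le g e" "1 \<le> e" "set_mset n \<subseteq> ?S"
      "size n + e \<le> r - k" for g e n
    by (rule annihilates_imp_pmul_functional[OF that(1-3) Q that(5)]) (use that(4,6) in linarith)
  show ?thesis
  proof
    fix x a n assume "x \<in> X" "set_mset n \<subseteq> ?S" "size n + 2 \<le> r - k"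
    then have "pE (\<lambda>m. ?T (m + n)) (psub (pmul (pvar (x, a)) (pvar (x, a))) (pvar (x, a))) = 0"
      using ann(1) by (intro zero[where e = 2]) (auto simp: pmul_pvar_pvar)
    then show "?T (add_mset (x, a) (add_mset (x, a) n)) = ?T (add_mset (x, a) n)"
      by (simp add: pmul_pvar_pvar)
  next
    fix x n assume "x \<in> X" "set_mset n \<subseteq> ?S" "size n + 1 \<le> r - k"
    then have "pE (\<lambda>m. ?T (m + n)) (psub (padd (pvar (x, False)) (pvar (x, True))) (pconst 1)) = 0"
      using ann(2) by (intro zero[where e = 1]) (auto intro!: deg_le_psub deg_le_padd)
    then show "?T (add_mset (x, False) n) + ?T (add_mset (x, True) n) = ?T n"
      by simp
  next
    fix e n assume "e \<in> set cs" "set_mset n \<subseteq> ?S" "size n + 3 \<le> r - k"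
    then have "pE (\<lambda>m. ?T (m + n)) (eq_poly e) = 0"
      using ann(3)
      by (intro zero[where e = 3]) (auto simp: eq_poly_eq intro!: deg_le_psub deg_le_psum)
    then show "(\<Sum>\<gamma>\<in>{\<gamma>. sat3 e \<gamma>}. ?T (assign_mon e \<gamma> + n)) = ?T n"
      by (simp add: eq_poly_eq)
  qed (rule inst)
qed

lemma xor_identities_mono:
  assumes "xor_identities X cs s T" "s' \<le> s"
  shows "xor_identities X cs s' T"
  using assms unfolding xor_identities_def by (meson order_trans)

context xor_identities
begin

abbreviation "SX \<equiv> X \<times> (UNIV :: bool set)"

abbreviation "VG \<equiv> gc_verts X cs"

abbreviation "VH \<equiv> gc_verts X (homog cs)"

abbreviation "EG \<equiv> gc_edges X cs"

abbreviation "EH \<equiv> gc_edges X (homog cs)"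

abbreviation "EGo \<equiv> {(u, u'). {u, u'} \<in> EG}"

abbreviation "EHo \<equiv> {(v, v'). {v, v'} \<in> EH}"

abbreviation "T' \<equiv> pullback (graph_subst cs) T"

lemma finite_VG: "finite VG" and finite_VH: "finite VH"
  using xor_instance by (simp_all add: xor3_instance_def finite_gc_verts)

lemma finite_EGo: "finite EGo"
  using finite_ordered_edges[OF xor_instance] .

lemma finite_EHo: "finite EHo"
  using finite_ordered_edges[OF xor3_instance_homog[OF xor_instance]] .

lemma EH_subset: "E \<in> EH \<Longrightarrow> E \<subseteq> VH"
  using xor3_instance_homog[OF xor_instance]
  by (intro gc_edges_subset_verts) (simp_all add: xor3_instance_def)

lemma contradictory:
  assumes x: "x \<in> X" and m: "(x, c) \<in># m" "(x, \<not> c) \<in># m" "set_mset m \<subseteq> SX" "size m \<le> s"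
  shows "T m = 0"
proof -
  have "(x, False) \<in># m" "(x, True) \<in># m"
    using m(1,2) by (cases c; simp)+
  then have "{#(x, False), (x, True)#} \<subseteq># m"
    by (simp add: insert_subset_eq_iff in_diff_count)
  then obtain n where mn: "m = add_mset (x, False) (add_mset (x, True) n)"
    by (metis add_mset_add_single add.commute subset_mset.add_diff_inverse union_mset_add_mset_left)
  have n: "set_mset (add_mset (x, False) n) \<subseteq> SX"
    using m(3) by (simp add: mn)
  have "T (add_mset (x, False) (add_mset (x, False) n)) +
      T (add_mset (x, True) (add_mset (x, False) n)) = T (add_mset (x, False) n)"
    using m(4) by (intro split_var[OF x n]) (simp add: mn)
  moreover have "T (add_mset (x, False) (add_mset (x, False) n)) = T (add_mset (x, False) n)"
    using m(3,4) by (intro idem[OF x]) (simp_all add: mn)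
  ultimately show ?thesis
    by (simp add: mn add_mset_commute)
qed

lemma absorb:
  assumes "set_mset a \<subseteq> set_mset b" "set_mset b \<subseteq> SX" "set_mset n \<subseteq> SX"
    "size a + size b + size n \<le> s"
  shows "T (a + b + n) = T (b + n)"
  using assms
proof (induction a arbitrary: n)
  case (add y a)
  have "y \<in># b"
    using add.prems(1) by simp
  then obtain b' where b: "b = add_mset y b'"
    by (metis insert_DiffM)
  obtain x c where y: "y = (x, c)" and x: "x \<in> X"
    using add.prems(2) \<open>y \<in># b\<close> by (cases y) auto
  have "T (add_mset y a + b + n) = T (a + b + add_mset y n)"
    by simp
  also have "\<dots> = T (b + add_mset y n)"
    using add.prems by (intro add.IH) auto
  also have "\<dots> = T (add_mset y (add_mset y (b' + n)))"
    by (simp add: b)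
  also have "\<dots> = T (add_mset y (b' + n))"
    using add.prems unfolding y by (intro idem[OF x]) (auto simp: b)
  finally show ?case
    by (simp add: b)
qed simp

lemma split_var_single: "x \<in> X \<Longrightarrow> 1 \<le> s \<Longrightarrow> T {#(x, c)#} + T {#(x, \<not> c)#} = T {#}"
  using split_var[of x "{#}"] by (cases c) (simp_all add: add.commute)

lemma split_eq_parity:
  assumes "i < length cs" "3 \<le> s"
  shows "(\<Sum>\<gamma>\<in>{\<gamma>. parity \<gamma> = rhs (cs ! i)}. T (assign_mon (cs ! i) \<gamma>)) = T {#}"
  using split_eq[of "cs ! i" "{#}"] assms by (simp add: sat3_iff_parity)

lemma distinct_assignments:
  assumes "i < length cs" "\<gamma> \<noteq> \<gamma>'" "6 \<le> s"
  shows "T (assign_mon (cs ! i) \<gamma> + assign_mon (cs ! i) \<gamma>') = 0"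
proof -
  obtain j where j: "j \<in> {1, 2, 3}" "assign_val \<gamma>' j = (\<not> assign_val \<gamma> j)"
    using assign_val_eqI[of \<gamma> \<gamma>'] assms(2) by blast
  show ?thesis
  proof (rule contradictory)
    show "eq_var (cs ! i) j \<in> X"
      using eq_ok_nth[OF xor_instance assms(1)] j(1) by (rule eq_var_mem)
    show "(eq_var (cs ! i) j, assign_val \<gamma> j) \<in># assign_mon (cs ! i) \<gamma> + assign_mon (cs ! i) \<gamma>'"
      using literal_in_assign_mon[OF j(1), of "cs ! i" \<gamma>] by simp
    show "(eq_var (cs ! i) j, \<not> assign_val \<gamma> j) \<in># assign_mon (cs ! i) \<gamma> + assign_mon (cs ! i) \<gamma>'"
      using literal_in_assign_mon[OF j(1), of "cs ! i" \<gamma>'] j(2) by simp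
    show "set_mset (assign_mon (cs ! i) \<gamma> + assign_mon (cs ! i) \<gamma>') \<subseteq> SX"
      using assign_mon_subset[OF eq_ok_nth[OF xor_instance assms(1)]] by simp
  qed (use assms(3) in simp)
qed

section \<open>The isomorphism axioms under the translation\<close>

lemma pullback_idem:
  assumes "u \<in> VG" "6 \<le> s"
  shows "T' {#(u, v), (u, v)#} = T' {#(u, v)#}"
proof (cases "graph_subst cs (u, v)")
  case (Some M)
  have "T (M + M + {#}) = T (M + {#})"
    using graph_subst_subset[OF xor_instance assms(1) Some] size_graph_subst[OF Some] assms(2)
    by (intro absorb) auto
  then show ?thesis
    using Some by (simp add: pullback_pair pullback_single)
qed (simp add: pullback_pair pullback_single)

lemma sum_even_translates:
  assumes "i < length cs" "sat3 (cs ! i) \<alpha>" "3 \<le> s"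
  shows "(\<Sum>\<beta>\<in>{\<beta>. \<not> parity \<beta>}. T (assign_mon (cs ! i) (xor_assign \<alpha> \<beta>))) = T {#}"
  using sum_xor_assign_left[where f = "\<lambda>\<gamma>. T (assign_mon (cs ! i) \<gamma>)" and \<alpha> = \<alpha> and p = False]
    split_eq_parity[OF assms(1,3)] assms(2)
  by (simp add: sat3_iff_parity)

lemma single_support:
  "T' {#(VarV x a, v)#} \<noteq> 0 \<Longrightarrow> \<exists>b. v = VarV x b"
  "T' {#(ConV i \<alpha>, v)#} \<noteq> 0 \<Longrightarrow> \<exists>\<beta>. v = ConV i \<beta>"
  "T' {#(u, VarV x b)#} \<noteq> 0 \<Longrightarrow> \<exists>a. u = VarV x a"
  "T' {#(u, ConV i \<beta>)#} \<noteq> 0 \<Longrightarrow> \<exists>\<alpha>. u = ConV i \<alpha>"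
  by (metis pullback_single_nonzero graph_subst_defined_iff(1),
      metis pullback_single_nonzero graph_subst_defined_iff(2),
      metis pullback_single_nonzero graph_subst_defined_iff(3),
      metis pullback_single_nonzero graph_subst_defined_iff(4))

lemma row_sum:
  assumes u: "u \<in> VG" and s: "3 \<le> s"
  shows "(\<Sum>v\<in>VH. T' {#(u, v)#}) = T {#}"
proof (cases u)
  case (VarV x c)
  have x: "x \<in> X"
    using u VarV by simp
  have "(\<Sum>v\<in>VH. T' {#(u, v)#}) = (\<Sum>v\<in>{VarV x False, VarV x True}. T' {#(u, v)#})"
    by (rule sum_eq_sum_on_support[OF finite_VH])
      (use x VarV in \<open>auto dest!: single_support(1)\<close>)
  also have "\<dots> = T {#}"
    using VarV split_var_single[OF x, of c] s by (cases c) (simp_all add: pullback_single)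
  finally show ?thesis .
next
  case (ConV i \<alpha>)
  have i: "i < length cs" and \<alpha>: "sat3 (cs ! i) \<alpha>"
    using u ConV by simp_all
  have "(\<Sum>v\<in>VH. T' {#(u, v)#}) = (\<Sum>v\<in>ConV i ` {\<beta>. \<not> parity \<beta>}. T' {#(u, v)#})"
    by (rule sum_eq_sum_on_support[OF finite_VH])
      (use i ConV in \<open>auto dest!: single_support(2) simp: sat3_homog_nth\<close>)
  also have "\<dots> = (\<Sum>\<beta>\<in>{\<beta>. \<not> parity \<beta>}. T (assign_mon (cs ! i) (xor_assign \<alpha> \<beta>)))"
    using ConV by (simp add: sum.reindex inj_on_def pullback_single)
  also have "\<dots> = T {#}"
    using i \<alpha> s by (rule sum_even_translates)
  finally show ?thesis .
qed

lemma col_sum: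
  assumes v: "v \<in> VH" and s: "3 \<le> s"
  shows "(\<Sum>u\<in>VG. T' {#(u, v)#}) = T {#}"
proof (cases v)
  case (VarV x c)
  have x: "x \<in> X"
    using v VarV by simp
  have "(\<Sum>u\<in>VG. T' {#(u, v)#}) = (\<Sum>u\<in>{VarV x False, VarV x True}. T' {#(u, v)#})"
    by (rule sum_eq_sum_on_support[OF finite_VG])
      (use x VarV in \<open>auto dest!: single_support(3)\<close>)
  also have "\<dots> = T {#}"
    using VarV split_var_single[OF x, of c] s
    by (cases c) (simp_all add: pullback_single add.commute)
  finally show ?thesis .
next
  case (ConV i \<beta>)
  have i: "i < length cs"
    using v ConV by simp
  have \<beta>: "\<not> parity \<beta>"
    using v ConV by (simp add: sat3_homog_nth[OF i])
  have "(\<Sum>u\<in>VG. T' {#(u, v)#}) = (\<Sum>u\<in>ConV i ` {\<alpha>. parity \<alpha> = rhs (cs ! i)}. T' {#(u, v)#})"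
    by (rule sum_eq_sum_on_support[OF finite_VG])
      (use i ConV in \<open>auto dest!: single_support(4) simp: sat3_iff_parity\<close>)
  also have "\<dots> = (\<Sum>\<alpha>\<in>{\<alpha>. parity \<alpha> = rhs (cs ! i)}. T (assign_mon (cs ! i) (xor_assign \<alpha> \<beta>)))"
    using ConV by (simp add: sum.reindex inj_on_def pullback_single)
  also have "\<dots> = T {#}"
    using sum_xor_assign_right[where f = "\<lambda>\<gamma>. T (assign_mon (cs ! i) \<gamma>)"
        and p = "rhs (cs ! i)" and \<beta> = \<beta>]
      \<beta> split_eq_parity[OF i] s
    by simp
  finally show ?thesis .
qed

lemma sum_EHo_swap:
  "(\<Sum>(v, v')\<in>EHo. T' {#(u, v), (u', v')#}) = (\<Sum>(v, v')\<in>EHo. T' {#(u', v), (u, v')#})"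
  by (rule sum.reindex_bij_witness[where i = "\<lambda>(v, v'). (v', v)" and j = "\<lambda>(v, v'). (v', v)"])
    (auto simp: insert_commute add_mset_commute)

lemma sum_EHo_restrict:
  assumes "D \<subseteq> EHo" "\<And>v v'. {v, v'} \<in> EH \<Longrightarrow> f (v, v') \<noteq> 0 \<Longrightarrow> (v, v') \<in> D"
  shows "sum f EHo = sum f D"
  using assms by (intro sum_eq_sum_on_support[OF finite_EHo]) auto

lemma support_var_edge:
  assumes "{v, v'} \<in> EH" "T' {#(VarV x c, v), (VarV x (\<not> c), v')#} \<noteq> 0"
  shows "(v, v') \<in> {(VarV x False, VarV x True), (VarV x True, VarV x False)}"
proof -
  have "graph_subst cs (VarV x c, v) \<noteq> None \<and> graph_subst cs (VarV x (\<not> c), v') \<noteq> None"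
    using assms(2) by (simp add: pullback_pair_nonzero)
  then obtain b b' where "v = VarV x b" "v' = VarV x b'"
    unfolding graph_subst_defined_iff by blast
  then show ?thesis
    using gc_edges_distinct[OF assms(1)] by (cases b; cases b') auto
qed

lemma support_constraint_edge:
  assumes i: "i < length cs" and e: "{v, v'} \<in> EH" and s: "6 \<le> s"
    and nz: "T' {#(ConV i \<alpha>, v), (ConV i \<alpha>', v')#} \<noteq> 0"
  shows "\<exists>\<beta>. \<not> parity \<beta> \<and> v = ConV i \<beta> \<and> v' = ConV i (xor_assign \<alpha>' (xor_assign \<alpha> \<beta>))"
proof -
  have "graph_subst cs (ConV i \<alpha>, v) \<noteq> None \<and> graph_subst cs (ConV i \<alpha>', v') \<noteq> None"
    using nz by (simp add: pullback_pair_nonzero)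
  then obtain \<beta> \<beta>' where v: "v = ConV i \<beta>" "v' = ConV i \<beta>'"
    unfolding graph_subst_defined_iff by blast
  have "xor_assign \<alpha> \<beta> = xor_assign \<alpha>' \<beta>'"
  proof (rule ccontr)
    assume "xor_assign \<alpha> \<beta> \<noteq> xor_assign \<alpha>' \<beta>'"
    then have "T' {#(ConV i \<alpha>, v), (ConV i \<alpha>', v')#} = 0"
      using distinct_assignments[OF i _ s] by (simp add: v pullback_pair)
    with nz show False
      by contradiction
  qed
  then have "\<beta>' = xor_assign \<alpha>' (xor_assign \<alpha> \<beta>)"
    by simp
  moreover have "\<not> parity \<beta>"
    using EH_subset[OF e] i by (simp add: v sat3_homog_nth)
  ultimately show ?thesis
    using v by blast
qed

lemma support_literal_edge:
  assumes i: "i < length cs" and j: "j \<in> {1, 2, 3}" and e: "{v, v'} \<in> EH"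
    and nz: "T' {#(ConV i \<alpha>, v), (VarV (eq_var (cs ! i) j) c, v')#} \<noteq> 0"
  shows "\<exists>\<beta>. \<not> parity \<beta> \<and> v = ConV i \<beta> \<and> v' = VarV (eq_var (cs ! i) j) (assign_val \<beta> j)"
proof -
  have "graph_subst cs (ConV i \<alpha>, v) \<noteq> None \<and>
      graph_subst cs (VarV (eq_var (cs ! i) j) c, v') \<noteq> None"
    using nz by (simp add: pullback_pair_nonzero)
  then obtain \<beta> c' where v: "v = ConV i \<beta>" "v' = VarV (eq_var (cs ! i) j) c'"
    unfolding graph_subst_defined_iff by blast
  obtain j' where j': "j' \<in> {1, 2, 3}" "eq_var (cs ! i) j = eq_var (cs ! i) j'"
      "c' = assign_val \<beta> j'"
    using e i unfolding v literal_edge_iff by auto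
  have "j' = j"
    using eq_var_inj[OF eq_ok_nth[OF xor_instance i] j'(1) j j'(2)[symmetric]] .
  moreover have "\<not> parity \<beta>"
    using EH_subset[OF e] i by (simp add: v sat3_homog_nth)
  ultimately show ?thesis
    using j'(3) v by blast
qed

lemma edge_sum_var:
  assumes x: "x \<in> X" and s: "6 \<le> s"
  shows "(\<Sum>(v, v')\<in>EHo. T' {#(VarV x c, v), (VarV x (\<not> c), v')#}) = T {#}"
proof -
  let ?f = "\<lambda>(v, v'). T' {#(VarV x c, v), (VarV x (\<not> c), v')#}"
  let ?D = "{(VarV x False, VarV x True), (VarV x True, VarV x False)}"
  have "{VarV x False, VarV x True} \<in> EH"
    using x by (rule gc_edges_intros)
  then have "sum ?f EHo = sum ?f ?D"
    by (intro sum_EHo_restrict) (auto simp: insert_commute dest: support_var_edge)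
  also have "\<dots> = T {#(x, c), (x, c)#} + T {#(x, \<not> c), (x, \<not> c)#}"
    by (cases c) (simp_all add: pullback_pair)
  also have "\<dots> = T {#(x, c)#} + T {#(x, \<not> c)#}"
    using idem[where x = x and n = "{#}"] x s by simp
  also have "\<dots> = T {#}"
    using x s by (simp add: split_var_single)
  finally show ?thesis .
qed

lemma partner_edge:
  assumes i: "i < length cs" and \<alpha>: "sat3 (cs ! i) \<alpha>" "sat3 (cs ! i) \<alpha>'" "\<alpha> \<noteq> \<alpha>'"
    and \<beta>: "\<not> parity \<beta>"
  shows "{ConV i \<beta>, ConV i (xor_assign \<alpha>' (xor_assign \<alpha> \<beta>))} \<in> EH"
proof (rule gc_edges_intros(2))
  have "xor_assign \<alpha>' \<beta> \<noteq> xor_assign \<alpha>' (xor_assign \<alpha>' (xor_assign \<alpha> \<beta>))"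
    using \<alpha>(3) by simp
  then show "\<beta> \<noteq> xor_assign \<alpha>' (xor_assign \<alpha> \<beta>)"
    by metis
  have "parity \<alpha> = parity \<alpha>'"
    using \<alpha> by (simp add: sat3_iff_parity)
  then show "sat3 (homog cs ! i) (xor_assign \<alpha>' (xor_assign \<alpha> \<beta>))"
    using \<beta> by (simp add: sat3_homog_nth[OF i] parity_xor_assign)
qed (use i \<beta> in \<open>simp_all add: sat3_homog_nth\<close>)

lemma edge_sum_constraint:
  assumes i: "i < length cs" and \<alpha>: "sat3 (cs ! i) \<alpha>" "sat3 (cs ! i) \<alpha>'" "\<alpha> \<noteq> \<alpha>'"
    and s: "6 \<le> s"
  shows "(\<Sum>(v, v')\<in>EHo. T' {#(ConV i \<alpha>, v), (ConV i \<alpha>', v')#}) = T {#}"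
proof -
  let ?f = "\<lambda>(v, v'). T' {#(ConV i \<alpha>, v), (ConV i \<alpha>', v')#}"
  let ?partner = "\<lambda>\<beta>. xor_assign \<alpha>' (xor_assign \<alpha> \<beta>)"
  let ?D = "(\<lambda>\<beta>. (ConV i \<beta>, ConV i (?partner \<beta>))) ` {\<beta>. \<not> parity \<beta>}"
  have mem: "{ConV i \<beta>, ConV i (?partner \<beta>)} \<in> EH" if "\<not> parity \<beta>" for \<beta>
    using partner_edge[OF i \<alpha> that] .
  have "sum ?f EHo = sum ?f ?D"
  proof (rule sum_EHo_restrict)
    show "?D \<subseteq> EHo"
      using mem by (auto intro!: image_subsetI)
  next
    fix v v' assume e: "{v, v'} \<in> EH" and "?f (v, v') \<noteq> 0"
    then have "T' {#(ConV i \<alpha>, v), (ConV i \<alpha>', v')#} \<noteq> 0"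
      by simp
    then obtain \<beta> where "\<not> parity \<beta>" "v = ConV i \<beta>" "v' = ConV i (?partner \<beta>)"
      using support_constraint_edge[OF i e s] by blast
    then show "(v, v') \<in> ?D"
      by (simp add: image_iff)
  qed
  also have "\<dots> = (\<Sum>\<beta>\<in>{\<beta>. \<not> parity \<beta>}. T (assign_mon (cs ! i) (xor_assign \<alpha> \<beta>)))"
  proof -
    have "T (M + M) = T M" if "M = assign_mon (cs ! i) \<gamma>" for M \<gamma>
      using absorb[of M M "{#}"] assign_mon_subset[OF eq_ok_nth[OF xor_instance i]] s that by simp
    then show ?thesis
      by (simp add: sum.reindex inj_on_def pullback_pair)
  qed
  also have "\<dots> = T {#}"
    using i \<alpha>(1) s by (simp add: sum_even_translates)
  finally show ?thesis .
qed

lemma edge_sum_literal: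
  assumes i: "i < length cs" and \<alpha>: "sat3 (cs ! i) \<alpha>" and j: "j \<in> {1, 2, 3}" and s: "6 \<le> s"
  shows "(\<Sum>(v, v')\<in>EHo. T' {#(ConV i \<alpha>, v), (VarV (eq_var (cs ! i) j) (assign_val \<alpha> j), v')#})
    = T {#}"
proof -
  let ?y = "eq_var (cs ! i) j"
  let ?f = "\<lambda>(v, v'). T' {#(ConV i \<alpha>, v), (VarV ?y (assign_val \<alpha> j), v')#}"
  let ?D = "(\<lambda>\<beta>. (ConV i \<beta>, VarV ?y (assign_val \<beta> j))) ` {\<beta>. \<not> parity \<beta>}"
  have mem: "{ConV i \<beta>, VarV ?y (assign_val \<beta> j)} \<in> EH" if "\<not> parity \<beta>" for \<beta>
    using gc_edges_intros(3)[of i "homog cs" \<beta> j X] i j that by (simp add: sat3_homog_nth)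
  have "sum ?f EHo = sum ?f ?D"
  proof (rule sum_EHo_restrict)
    show "?D \<subseteq> EHo"
      using mem by (auto intro!: image_subsetI)
  next
    fix v v' assume e: "{v, v'} \<in> EH" and "?f (v, v') \<noteq> 0"
    then have "T' {#(ConV i \<alpha>, v), (VarV ?y (assign_val \<alpha> j), v')#} \<noteq> 0"
      by simp
    then obtain \<beta> where "\<not> parity \<beta>" "v = ConV i \<beta>" "v' = VarV ?y (assign_val \<beta> j)"
      using support_literal_edge[OF i j e] by blast
    then show "(v, v') \<in> ?D"
      by (simp add: image_iff)
  qed
  also have "\<dots> = (\<Sum>\<beta>\<in>{\<beta>. \<not> parity \<beta>}. T (assign_mon (cs ! i) (xor_assign \<alpha> \<beta>)))"
  proof -
    have "T ({#(?y, assign_val \<gamma> j)#} + assign_mon (cs ! i) \<gamma>) = T (assign_mon (cs ! i) \<gamma>)" for \<gamma>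
      using absorb[of "{#(?y, assign_val \<gamma> j)#}" "assign_mon (cs ! i) \<gamma>" "{#}"]
        literal_in_assign_mon[OF j, of "cs ! i" \<gamma>]
        assign_mon_subset[OF eq_ok_nth[OF xor_instance i]] s
      by simp
    from this[of "xor_assign \<alpha> _"] show ?thesis
      by (simp add: sum.reindex inj_on_def pullback_pair assign_val_xor_assign)
  qed
  also have "\<dots> = T {#}"
    using i \<alpha> s by (simp add: sum_even_translates)
  finally show ?thesis .
qed

lemma edge_sum:
  assumes e: "{u, u'} \<in> EG" and s: "6 \<le> s"
  shows "(\<Sum>(v, v')\<in>EHo. T' {#(u, v), (u', v')#}) = T {#}"
  using mem_gc_edges[THEN iffD1, OF e]
proof (elim disjE bexE exE conjE)
  fix x assume x: "x \<in> X" and "{u, u'} = {VarV x False, VarV x True}"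
  then consider "u = VarV x False" "u' = VarV x (\<not> False)"
    | "u = VarV x True" "u' = VarV x (\<not> True)"
    unfolding doubleton_eq_iff by auto
  then show ?thesis
    by cases (simp_all only: edge_sum_var[OF x s])
next
  fix i \<alpha> \<beta> assume i: "i < length cs" "sat3 (cs ! i) \<alpha>" "sat3 (cs ! i) \<beta>" "\<alpha> \<noteq> \<beta>"
    and "{u, u'} = {ConV i \<alpha>, ConV i \<beta>}"
  then consider "u = ConV i \<alpha>" "u' = ConV i \<beta>" | "u = ConV i \<beta>" "u' = ConV i \<alpha>"
    unfolding doubleton_eq_iff by blast
  then show ?thesis
    by cases
      (simp_all only: edge_sum_constraint[OF i s] edge_sum_constraint[OF i(1,3,2) i(4)[symmetric] s])
next
  fix i \<alpha> j assume i: "i < length cs" "sat3 (cs ! i) \<alpha>" "j \<in> {1, 2, 3}"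
    and "{u, u'} = {ConV i \<alpha>, VarV (eq_var (cs ! i) j) (assign_val \<alpha> j)}"
  then consider "u = ConV i \<alpha>" "u' = VarV (eq_var (cs ! i) j) (assign_val \<alpha> j)"
    | "u' = ConV i \<alpha>" "u = VarV (eq_var (cs ! i) j) (assign_val \<alpha> j)"
    unfolding doubleton_eq_iff by blast
  then show ?thesis
    using edge_sum_literal[OF i s] sum_EHo_swap[of u u'] by cases simp_all
qed

lemma pE_pullback_bool_generator:
  assumes "u \<in> VG" "6 \<le> s"
  shows "pE T' (psub (pmul (pvar (u, v)) (pvar (u, v))) (pvar (u, v))) = 0"
  using pullback_idem[OF assms] by (simp add: pE_bool_generator)

lemma pE_pullback_row_generator:
  assumes "u \<in> VG" "3 \<le> s"
  shows "pE T' (psub (psum VH (\<lambda>v. pvar (u, v))) (pconst 1)) = 0"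
  using row_sum[OF assms] finite_VH by simp

lemma pE_pullback_col_generator:
  assumes "v \<in> VH" "3 \<le> s"
  shows "pE T' (psub (psum VG (\<lambda>u. pvar (u, v))) (pconst 1)) = 0"
  using col_sum[OF assms] finite_VG by simp

lemma pE_pullback_edge_generator:
  assumes "6 \<le> s"
  shows "pE T' (psub (edge_poly EG EH) (pconst (real (card EG)))) = 0"
proof -
  have "pE T' (edge_poly EG EH) = 1 / 2 * (\<Sum>(u, u')\<in>EGo. T {#})"
    using edge_sum[OF _ assms] by (simp add: pE_edge_poly finite_EGo finite_EHo case_prod_beta)
  also have "\<dots> = real (card EG) * T {#}"
    using card_ordered_pairs[OF finite_gc_edges[OF xor_instance] gc_edges_doubleton] by simp
  finally show ?thesis
    using finite_supp_edge_poly[OF finite_EGo finite_EHo] by simp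
qed

end

context
  fixes X :: "'x set" and cs :: "'x xor_eq list" and r :: nat
    and L :: "('x \<times> bool) multiset \<Rightarrow> real"
  assumes inst: "xor3_instance X cs" and L: "xor_pseudo_exp X cs r L"
begin

lemma annihilates_graph_pullback:
  assumes d: "3 * d \<le> r" and g: "finite (supp g)" "g a \<noteq> 0"
    and zero: "\<And>T. xor_identities X cs (3 * size a) T \<Longrightarrow> pE (pullback (graph_subst cs) T) g = 0"
  shows "annihilates (pullback (graph_subst cs) L) (gc_verts X cs \<times> gc_verts X (homog cs)) d g"
proof (rule annihilates_pullback[OF size_graph_subst _ g])
  fix w M assume "w \<in> gc_verts X cs \<times> gc_verts X (homog cs)" "graph_subst cs w = Some M"
  then show "set_mset M \<subseteq> X \<times> UNIV"
    using graph_subst_subset[OF inst] by (cases w) auto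
next
  fix Q assume Q: "poly_over (X \<times> (UNIV :: bool set)) Q" "deg_le Q (3 * (d - size a))"
    and a: "size a \<le> d"
  have "xor_identities X cs (r - 3 * (d - size a)) (pmul_functional L Q)"
    by (rule xor_identities_pmul_functional[OF inst L Q])
  then have "xor_identities X cs (3 * size a) (pmul_functional L Q)"
    by (rule xor_identities_mono) (use d a in linarith)
  then show "pE (pullback (graph_subst cs) (pmul_functional L Q)) g = 0"
    by (rule zero)
qed

lemma annihilates_bool_generator:
  assumes "3 * d \<le> r" "u \<in> gc_verts X cs"
  shows "annihilates (pullback (graph_subst cs) L) (gc_verts X cs \<times> gc_verts X (homog cs)) d
           (psub (pmul (pvar (u, v)) (pvar (u, v))) (pvar (u, v)))"
proof (rule annihilates_graph_pullback[OF assms(1), where a = "{#(u, v), (u, v)#}"])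
  show "psub (pmul (pvar (u, v)) (pvar (u, v))) (pvar (u, v)) {#(u, v), (u, v)#} \<noteq> 0"
    by (simp add: pmul_pvar_pvar psub_def) (simp add: pmon_def pvar_def)
next
  fix T assume "xor_identities X cs (3 * size {#(u, v), (u, v)#}) T"
  then show "pE (pullback (graph_subst cs) T)
      (psub (pmul (pvar (u, v)) (pvar (u, v))) (pvar (u, v))) = 0"
    using assms(2) by (rule xor_identities.pE_pullback_bool_generator) simp
qed simp

lemma annihilates_row_generator:
  assumes "3 * d \<le> r" "u \<in> gc_verts X cs"
  shows "annihilates (pullback (graph_subst cs) L) (gc_verts X cs \<times> gc_verts X (homog cs)) d
           (psub (psum (gc_verts X (homog cs)) (\<lambda>v. pvar (u, v))) (pconst 1))"
    (is "annihilates _ _ _ ?g")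
proof -
  obtain x where "x \<in> X"
    using nonempty_if_vertex[OF inst assms(2)] ..
  then have x: "VarV x False \<in> gc_verts X (homog cs)"
    by simp
  have fin: "finite (gc_verts X (homog cs))"
    using inst by (simp add: xor3_instance_def finite_gc_verts)
  then have fg: "finite (supp ?g)"
    by simp
  show ?thesis
  proof (rule annihilates_graph_pullback[OF assms(1) fg, where a = "{#(u, VarV x False)#}"])
    show "?g {#(u, VarV x False)#} \<noteq> 0"
      using x fin by (subst coeff_eq_pE[OF fg]) (simp add: sum.delta)
  next
    fix T assume "xor_identities X cs (3 * size {#(u, VarV x False)#}) T"
    then show "pE (pullback (graph_subst cs) T) ?g = 0"
      using assms(2) by (rule xor_identities.pE_pullback_row_generator) simp
  qed
qed

lemma annihilates_col_generator:
  assumes "3 * d \<le> r" "v \<in> gc_verts X (homog cs)"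
  shows "annihilates (pullback (graph_subst cs) L) (gc_verts X cs \<times> gc_verts X (homog cs)) d
           (psub (psum (gc_verts X cs) (\<lambda>u. pvar (u, v))) (pconst 1))"
    (is "annihilates _ _ _ ?g")
proof -
  obtain x where "x \<in> X"
    using nonempty_if_vertex[OF xor3_instance_homog[OF inst] assms(2)] ..
  then have x: "VarV x False \<in> gc_verts X cs"
    by simp
  have fin: "finite (gc_verts X cs)"
    using inst by (simp add: xor3_instance_def finite_gc_verts)
  then have fg: "finite (supp ?g)"
    by simp
  show ?thesis
  proof (rule annihilates_graph_pullback[OF assms(1) fg, where a = "{#(VarV x False, v)#}"])
    show "?g {#(VarV x False, v)#} \<noteq> 0"
      using x fin by (subst coeff_eq_pE[OF fg]) (simp add: sum.delta)
  next
    fix T assume "xor_identities X cs (3 * size {#(VarV x False, v)#}) T"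
    then show "pE (pullback (graph_subst cs) T) ?g = 0"
      using assms(2) by (rule xor_identities.pE_pullback_col_generator) simp
  qed
qed

lemma annihilates_edge_generator:
  assumes d: "3 * d \<le> r"
  shows "annihilates (pullback (graph_subst cs) L) (gc_verts X cs \<times> gc_verts X (homog cs)) d
           (psub (edge_poly (gc_edges X cs) (gc_edges X (homog cs)))
             (pconst (real (card (gc_edges X cs)))))"
    (is "annihilates _ _ _ ?g")
proof (cases "gc_edges X cs = {}")
  case True
  then show ?thesis
    by (intro annihilates_zero) (simp add: psub_def edge_poly_def psmult_def psum_def pconst_def)
next
  case False
  let ?EGo = "{(u, u'). {u, u'} \<in> gc_edges X cs}"
  let ?EHo = "{(v, v'). {v, v'} \<in> gc_edges X (homog cs)}"
  obtain u u' where uu: "{u, u'} \<in> gc_edges X cs"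
    using False gc_edges_doubleton by blast
  then have "u \<in> gc_verts X cs"
    using inst gc_edges_subset_verts by (fastforce simp: xor3_instance_def)
  then obtain x where "x \<in> X"
    using nonempty_if_vertex[OF inst] by blast
  then have vv: "{VarV x False, VarV x True} \<in> gc_edges X (homog cs)"
    by (rule gc_edges_intros(1))
  let ?a = "{#(u, VarV x False), (u', VarV x True)#}"
  have fin: "finite ?EGo" "finite ?EHo"
    using inst xor3_instance_homog[OF inst] by (simp_all add: finite_ordered_edges)
  then have fg: "finite (supp ?g)"
    by (simp add: finite_supp_edge_poly)
  have "?g ?a \<noteq> 0"
    using edge_poly_coeff_pos[OF fin uu vv] by (simp add: psub_def pconst_def)
  then show ?thesis
  proof (rule annihilates_graph_pullback[OF d fg])
    fix T assume "xor_identities X cs (3 * size ?a) T"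
    then show "pE (pullback (graph_subst cs) T) ?g = 0"
      by (rule xor_identities.pE_pullback_edge_generator) simp
  qed
qed

lemma psd_graph_pullback:
  assumes d: "3 * d \<le> r"
  shows "psd_op (pullback (graph_subst cs) L) (gc_verts X cs \<times> gc_verts X (homog cs)) d"
  unfolding psd_op_def
proof (intro allI impI)
  fix p assume p: "poly_over (gc_verts X cs \<times> gc_verts X (homog cs)) p" and dp: "deg_le p (d div 2)"
  let ?P = "subst (graph_subst cs) p"
  have "poly_over (X \<times> UNIV) ?P"
    using p graph_subst_subset[OF inst] by (intro poly_over_subst) auto
  moreover have "deg_le ?P (3 * (d div 2))"
    by (rule deg_le_subst[OF dp]) (rule size_graph_subst)
  then have "deg_le ?P (r div 2)"
    by (rule deg_le_mono) (use d in linarith)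
  moreover have "psd_op L (X \<times> UNIV) r"
    using L by (simp add: xor_pseudo_exp_def Let_def)
  ultimately have "pE L (pmul ?P ?P) \<ge> 0"
    by (simp add: psd_op_def)
  then show "pE (pullback (graph_subst cs) L) (pmul p p) \<ge> 0"
    using p by (simp add: pE_pullback_square finite_supp_if_poly_over)
qed

lemma iso_pseudo_exp_graph_pullback:
  assumes d: "3 * d \<le> r"
  shows "iso_pseudo_exp (gc_verts X cs) (gc_edges X cs)
           (gc_verts X (homog cs)) (gc_edges X (homog cs)) d (pullback (graph_subst cs) L)"
  unfolding iso_pseudo_exp_def Let_def
proof (intro conjI ballI allI impI)
  show "pullback (graph_subst cs) L {#} = 1"
    using L by (simp add: xor_pseudo_exp_def Let_def)
next
  fix p assume "poly_over (gc_verts X cs \<times> gc_verts X (homog cs)) p"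
    and "deg_le (pmul (psub (edge_poly (gc_edges X cs) (gc_edges X (homog cs)))
                 (pconst (real (card (gc_edges X cs))))) (pmul p p)) d"
  then show "0 \<le> pE (pullback (graph_subst cs) L) (pmul (psub (edge_poly (gc_edges X cs)
                 (gc_edges X (homog cs))) (pconst (real (card (gc_edges X cs))))) (pmul p p))"
    using annihilates_edge_generator[OF d] by (simp add: annihilates_def poly_over_pmul)
qed (simp_all add: d annihilates_bool_generator annihilates_row_generator annihilates_col_generator
      psd_graph_pullback)

end

theorem lemma4p2:
  fixes X :: "'x set" and cs :: "'x xor_eq list" and r :: nat
  assumes "xor3_instance X cs"
    and "\<exists>L. xor_pseudo_exp X cs r L"
  shows "\<forall>d. 3 * d \<le> r \<longrightarrow>
           (\<exists>L. iso_pseudo_exp (gc_verts X cs) (gc_edges X cs)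
                               (gc_verts X (homog cs)) (gc_edges X (homog cs)) d L)"
proof (intro allI impI)
  fix d assume "3 * d \<le> r"
  obtain L where "xor_pseudo_exp X cs r L"
    using assms(2) ..
  then show "\<exists>L. iso_pseudo_exp (gc_verts X cs) (gc_edges X cs)
                     (gc_verts X (homog cs)) (gc_edges X (homog cs)) d L"
    using iso_pseudo_exp_graph_pullback[OF assms(1)] \<open>3 * d \<le> r\<close> by blast
qed

end
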